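(* Let $G$ be a simple, undirected, connected graph on $N$ vertices with edge set $E$ and degrees $d_j$. Let $\lambda_2$ be the second largest eigenvalue of the transition matrix $P$ of the simple random walk on $G$, and set $$k=\left\lfloor\frac{\lambda_2(N-1)+1}{\lambda_2+1}\right\rfloor,\qquad \theta=\lambda_2(N-k-2)-k+2.$$ Then $$R^+(G)\le N\left(\frac{N-k-2}{1-\lambda_2}+\frac{k}{2}+\frac{1}{\theta}\right)+\frac{1}{1-\lambda_2}\left(2|E|\sum_{j}\frac{1}{d_j}-N\right).$$
   Context: $P=(p(v,w))$ is the $N\times N$ matrix with $p(v,w)=1/d_v$ if $v,w$ are adjacent and $0$ otherwise; its eigenvalues are real, $1=\lambda_1>\lambda_2\ge\cdots\ge\lambda_N\ge-1$. For vertices $i,j$, $R_{ij}$ denotes the effective resistance between $i$ and $j$ when every edge is a unit resistor. The additive degree-Kirchhoff index is $R^+(G)=\sum_{i<j}(d_i+d_j)R_{ij}$. *)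

theory Defs
  imports "HOL-Analysis.Analysis" "Jordan_Normal_Form.Char_Poly"
begin

definition simple_graph :: "nat \<Rightarrow> (nat \<Rightarrow> nat \<Rightarrow> bool) \<Rightarrow> bool" where
  "simple_graph N E \<longleftrightarrow>
     (\<forall>u v. E u v \<longrightarrow> u < N \<and> v < N) \<and>
     (\<forall>u v. E u v \<longrightarrow> E v u) \<and>
     (\<forall>u. \<not> E u u)"

definition connected_graph :: "nat \<Rightarrow> (nat \<Rightarrow> nat \<Rightarrow> bool) \<Rightarrow> bool" where
  "connected_graph N E \<longleftrightarrow> (\<forall>u v. u < N \<longrightarrow> v < N \<longrightarrow> E\<^sup>*\<^sup>* u v)"

definition degree :: "nat \<Rightarrow> (nat \<Rightarrow> nat \<Rightarrow> bool) \<Rightarrow> nat \<Rightarrow> nat" where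
  "degree N E v = card {w. w < N \<and> E v w}"

definition num_edges :: "nat \<Rightarrow> (nat \<Rightarrow> nat \<Rightarrow> bool) \<Rightarrow> nat" where
  "num_edges N E = card {(u, v). u < v \<and> v < N \<and> E u v}"

definition transition_matrix :: "nat \<Rightarrow> (nat \<Rightarrow> nat \<Rightarrow> bool) \<Rightarrow> real mat" where
  "transition_matrix N E =
     mat N N (\<lambda>(v, w). if E v w then 1 / real (degree N E v) else 0)"

text \<open>The k-th largest root (counted with multiplicity) of a real polynomial, i.e. the
  largest x such that at least k roots (with multiplicity) are \<ge> x.\<close>
definition kth_largest_root :: "nat \<Rightarrow> real poly \<Rightarrow> real" where
  "kth_largest_root k p =
     (GREATEST x. k \<le> (\<Sum>y\<in>{y. poly p y = 0 \<and> x \<le> y}. order y p))"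

definition second_largest_eigenvalue :: "real mat \<Rightarrow> real" where
  "second_largest_eigenvalue A = kth_largest_root 2 (char_poly A)"

text \<open>Effective resistance between i and j (unit resistors on all edges): the potential
  difference x_i - x_j, where x is a potential for which a unit current enters at i and
  leaves at j, i.e. L x = e_i - e_j with L the combinatorial Laplacian.\<close>
definition effective_resistance :: "nat \<Rightarrow> (nat \<Rightarrow> nat \<Rightarrow> bool) \<Rightarrow> nat \<Rightarrow> nat \<Rightarrow> real" where
  "effective_resistance N E i j =
     (THE r. \<exists>x :: nat \<Rightarrow> real.
        (\<forall>v<N. real (degree N E v) * x v - (\<Sum>w | w < N \<and> E v w. x w)
                 = (if v = i then 1 else 0) - (if v = j then 1 else 0))
        \<and> r = x i - x j)"

definition additive_degree_kirchhoff :: "nat \<Rightarrow> (nat \<Rightarrow> nat \<Rightarrow> bool) \<Rightarrow> real" where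
  "additive_degree_kirchhoff N E =
     (\<Sum>(i, j)\<in>{(i, j). i < j \<and> j < N}.
        real (degree N E i + degree N E j) * effective_resistance N E i j)"

end

theory Submission
  imports Defs
begin

text \<open>
  Let \<open>S = D\<^sup>-\<^sup>1\<^sup>/\<^sup>2 A D\<^sup>-\<^sup>1\<^sup>/\<^sup>2\<close> be the normalized adjacency matrix. It is symmetric and similar
  to \<open>P = D\<^sup>-\<^sup>1 A\<close>, so it has an orthonormal eigenbasis \<open>u\<^sub>0, \<dots>, u\<^sub>N\<^sub>-\<^sub>1\<close> with
  \<open>u\<^sub>0 = \<surd>d / \<surd>vol\<close>, eigenvalue \<open>\<mu>\<^sub>0 = 1\<close>, and the other eigenvalues \<open>\<mu>\<^sub>k\<close> are those of \<open>P\<close>: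
  they lie in \<open>[-1, \<lambda>\<^sub>2]\<close> and sum to \<open>-1\<close> because \<open>tr S = 0\<close>. Inverting the Laplacian
  on the complement of \<open>u\<^sub>0\<close> gives
  \<open>R\<^sub>i\<^sub>j = \<Sum>\<^sub>k\<^sub>\<ge>\<^sub>1 (u\<^sub>k(i)/\<surd>d\<^sub>i - u\<^sub>k(j)/\<surd>d\<^sub>j)\<^sup>2 / (1 - \<mu>\<^sub>k)\<close>,
  and summing with weights \<open>d\<^sub>i + d\<^sub>j\<close> yields
  \<open>R\<^sup>+ = \<Sum>\<^sub>k\<^sub>\<ge>\<^sub>1 (N + vol \<Sum>\<^sub>i u\<^sub>k(i)\<^sup>2 / d\<^sub>i) / (1 - \<mu>\<^sub>k)\<close>.
  In the second part we bound \<open>1 - \<mu>\<^sub>k \<ge> 1 - \<lambda>\<^sub>2\<close> and use completeness of the basis,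
  \<open>\<Sum>\<^sub>k\<^sub>\<ge>\<^sub>1 u\<^sub>k(i)\<^sup>2 = 1 - d\<^sub>i / vol\<close>. The first part, \<open>N \<Sum>\<^sub>k\<^sub>\<ge>\<^sub>1 1 / (1 - \<mu>\<^sub>k)\<close>, is a
  convex function of the \<open>\<mu>\<^sub>k\<close>, maximised under these constraints by pushing all but one of
  them to the end points \<open>-1\<close> and \<open>\<lambda>\<^sub>2\<close>; this gives the terms with \<open>k\<close> and \<open>\<theta>\<close>.
\<close>

section \<open>Vectors and orthonormal families\<close>

text \<open>Vectors of \<open>\<real>\<^sup>n\<close> are functions \<open>nat \<Rightarrow> real\<close> of which only the first \<open>n\<close> values
  matter, and \<open>n \<times> n\<close> matrices are functions \<open>nat \<Rightarrow> nat \<Rightarrow> real\<close>.\<close>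

definition dot :: "nat \<Rightarrow> (nat \<Rightarrow> real) \<Rightarrow> (nat \<Rightarrow> real) \<Rightarrow> real" where
  "dot n x y = (\<Sum>i<n. x i * y i)"

definition matvec :: "nat \<Rightarrow> (nat \<Rightarrow> nat \<Rightarrow> real) \<Rightarrow> (nat \<Rightarrow> real) \<Rightarrow> nat \<Rightarrow> real" where
  "matvec n M x i = (\<Sum>j<n. M i j * x j)"

definition symmetric_matrix :: "nat \<Rightarrow> (nat \<Rightarrow> nat \<Rightarrow> real) \<Rightarrow> bool" where
  "symmetric_matrix n M \<longleftrightarrow> (\<forall>i<n. \<forall>j<n. M i j = M j i)"

definition orthonormal :: "nat \<Rightarrow> nat \<Rightarrow> (nat \<Rightarrow> nat \<Rightarrow> real) \<Rightarrow> bool" where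
  "orthonormal n m u \<longleftrightarrow> (\<forall>k<m. \<forall>l<m. dot n (u k) (u l) = (if k = l then 1 else 0))"

lemma dot_comm: "dot n x y = dot n y x"
  unfolding dot_def by (simp add: mult.commute)

lemma dot_sum_right: "dot n x (\<lambda>i. \<Sum>k\<in>A. f k i) = (\<Sum>k\<in>A. dot n x (f k))"
  unfolding dot_def by (simp add: sum_distrib_left sum.swap[of _ A])

lemma dot_sum_left: "dot n (\<lambda>i. \<Sum>k\<in>A. f k i) x = (\<Sum>k\<in>A. dot n (f k) x)"
  unfolding dot_def by (simp add: sum_distrib_right sum.swap[of _ A])

lemma dot_diff_right: "dot n x (\<lambda>i. y i - z i) = dot n x y - dot n x z"
  unfolding dot_def by (simp add: algebra_simps sum_subtractf)

lemma dot_diff_left: "dot n (\<lambda>i. y i - z i) x = dot n y x - dot n z x"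
  unfolding dot_def by (simp add: algebra_simps sum_subtractf)

lemma dot_scale_right: "dot n x (\<lambda>i. c * y i) = c * dot n x y"
  unfolding dot_def by (simp add: sum_distrib_left algebra_simps)

lemma dot_scale_left: "dot n (\<lambda>i. c * y i) x = c * dot n y x"
  unfolding dot_def by (simp add: sum_distrib_left algebra_simps)

lemma dot_div_right: "dot n x (\<lambda>i. y i / c) = dot n x y / c"
  unfolding dot_def by (simp add: sum_divide_distrib)

lemma dot_div_left: "dot n (\<lambda>i. y i / c) x = dot n y x / c"
  unfolding dot_def by (simp add: sum_divide_distrib)

lemma dot_add_right: "dot n x (\<lambda>i. y i + z i) = dot n x y + dot n x z"
  unfolding dot_def by (simp add: algebra_simps sum.distrib)

lemma dot_add_left: "dot n (\<lambda>i. y i + z i) x = dot n y x + dot n z x"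
  unfolding dot_def by (simp add: algebra_simps sum.distrib)

lemma matvec_sum: "matvec n M (\<lambda>w. \<Sum>k\<in>K. f k * g k w) v = (\<Sum>k\<in>K. f k * matvec n M (g k) v)"
  unfolding matvec_def by (simp add: sum_distrib_left sum.swap[of _ K] algebra_simps)

lemma matvec_lin: "matvec n M (\<lambda>i. a i + t * b i) i = matvec n M a i + t * matvec n M b i"
  unfolding matvec_def by (simp add: algebra_simps sum.distrib sum_distrib_left)

lemma div_sqrt_div_sqrt_self: "(a::real) > 0 \<Longrightarrow> a / sqrt a / sqrt a = 1"
  by (metis abs_of_pos divide_divide_eq_left divide_self_if less_irrefl real_sqrt_mult_self)

lemma dot_self_nonneg: "dot n x x \<ge> 0"
  unfolding dot_def by (intro sum_nonneg) auto

lemma dot_self_zero: "dot n x x = 0 \<Longrightarrow> i < n \<Longrightarrow> x i = 0"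
  unfolding dot_def by (subst (asm) sum_nonneg_eq_0_iff) auto

lemma dot_cong: "(\<And>i. i < n \<Longrightarrow> x i = x' i) \<Longrightarrow> (\<And>i. i < n \<Longrightarrow> y i = y' i) \<Longrightarrow> dot n x y = dot n x' y'"
  unfolding dot_def by (intro sum.cong) auto

lemma dot_matvec_symmetric: assumes "symmetric_matrix n M" shows "dot n x (matvec n M y) = dot n (matvec n M x) y"
proof -
  have "dot n x (matvec n M y) = (\<Sum>i<n. \<Sum>j<n. x i * M i j * y j)"
    unfolding dot_def matvec_def by (simp add: sum_distrib_left algebra_simps)
  also have "\<dots> = (\<Sum>j<n. \<Sum>i<n. x i * M i j * y j)" by (rule sum.swap)
  also have "\<dots> = dot n (matvec n M x) y"
    unfolding dot_def matvec_def using assms unfolding symmetric_matrix_def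
    by (intro sum.cong refl) (auto simp: sum_distrib_right sum_distrib_left mult_ac intro!: sum.cong)
  finally show ?thesis .
qed

definition residual :: "nat \<Rightarrow> nat \<Rightarrow> (nat \<Rightarrow> nat \<Rightarrow> real) \<Rightarrow> (nat \<Rightarrow> real) \<Rightarrow> nat \<Rightarrow> real" where
  "residual n m u x = (\<lambda>i. x i - (\<Sum>k<m. dot n (u k) x * u k i))"

lemma residual_orth: assumes "orthonormal n m u" "l < m" shows "dot n (u l) (residual n m u x) = 0"
proof -
  have "dot n (u l) (residual n m u x) = dot n (u l) x - (\<Sum>k<m. dot n (u l) (\<lambda>i. dot n (u k) x * u k i))"
    unfolding residual_def by (simp add: dot_diff_right dot_sum_right)
  also have "(\<Sum>k<m. dot n (u l) (\<lambda>i. dot n (u k) x * u k i)) = (\<Sum>k<m. dot n (u k) x * (if l = k then 1 else 0))"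
    using assms unfolding orthonormal_def by (intro sum.cong) (auto simp: dot_scale_right)
  also have "\<dots> = dot n (u l) x" using assms(2) by (simp add: if_distrib sum.delta cong: if_cong)
  finally show ?thesis by simp
qed

lemma residual_norm: assumes "orthonormal n m u"
  shows "dot n (residual n m u x) (residual n m u x) = dot n x x - (\<Sum>k<m. (dot n (u k) x)^2)"
proof -
  have "dot n (residual n m u x) (residual n m u x) = dot n x (residual n m u x) - (\<Sum>k<m. dot n (\<lambda>i. dot n (u k) x * u k i) (residual n m u x))"
    by (subst (1) residual_def) (simp add: dot_diff_left dot_sum_left)
  also have "(\<Sum>k<m. dot n (\<lambda>i. dot n (u k) x * u k i) (residual n m u x)) = 0"
    using residual_orth[OF assms] by (intro sum.neutral) (auto simp: dot_scale_left)
  also have "dot n x (residual n m u x) = dot n x x - (\<Sum>k<m. dot n (u k) x * dot n x (u k))"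
    unfolding residual_def by (simp add: dot_diff_right dot_sum_right dot_scale_right)
  finally show ?thesis by (simp add: dot_comm power2_eq_square)
qed

definition std_basis :: "nat \<Rightarrow> nat \<Rightarrow> real" where "std_basis j = (\<lambda>i. if i = j then 1 else 0)"

lemma dot_std_basis: "j < n \<Longrightarrow> dot n x (std_basis j) = x j"
  unfolding dot_def std_basis_def by (simp add: if_distrib sum.delta cong: if_cong)

lemma dot_std_basis_self: "j < n \<Longrightarrow> dot n (std_basis j) (std_basis j) = 1"
  using dot_std_basis[of j n "std_basis j"] by (simp add: std_basis_def)

lemma orthonormal_sum_sq: assumes "orthonormal n m u"
  shows "(\<Sum>j<n. \<Sum>k<m. (u k j)^2) = real m"
proof -
  have "(\<Sum>j<n. \<Sum>k<m. (u k j)^2) = (\<Sum>k<m. dot n (u k) (u k))"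
    unfolding dot_def by (subst sum.swap) (simp add: power2_eq_square)
  also have "\<dots> = (\<Sum>k<m. 1)" using assms unfolding orthonormal_def by (intro sum.cong) auto
  finally show ?thesis by simp
qed

lemma orthonormal_le: assumes "orthonormal n m u" shows "m \<le> n"
proof -
  have "(\<Sum>k<m. (u k j)^2) \<le> 1" if "j < n" for j
  proof -
    have "(\<Sum>k<m. (dot n (u k) (std_basis j))^2) \<le> 1"
      using residual_norm[OF assms, of "std_basis j"] dot_self_nonneg[of n "residual n m u (std_basis j)"]
        dot_std_basis_self[OF that] by linarith
    thus ?thesis using that by (simp add: dot_std_basis)
  qed
  hence "(\<Sum>j<n. \<Sum>k<m. (u k j)^2) \<le> (\<Sum>j<n. 1)" by (intro sum_mono) auto
  thus ?thesis using orthonormal_sum_sq[OF assms] by simp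
qed

lemma orthonormal_nonspan: assumes "orthonormal n m u" "m < n"
  shows "\<exists>j<n. dot n (residual n m u (std_basis j)) (residual n m u (std_basis j)) \<noteq> 0"
proof (rule ccontr)
  assume "\<not> ?thesis"
  hence "(\<Sum>k<m. (u k j)^2) = 1" if "j < n" for j
    using residual_norm[OF assms(1), of "std_basis j"] dot_std_basis_self[OF that] that by (simp add: dot_std_basis)
  hence "(\<Sum>j<n. \<Sum>k<m. (u k j)^2) = real n" by simp
  thus False using orthonormal_sum_sq[OF assms(1)] assms(2) by simp
qed

lemma orthonormal_extend:
  assumes on: "orthonormal n m u" and w: "dot n w w = 1" and wu: "\<And>l. l < m \<Longrightarrow> dot n (u l) w = 0"
  shows "orthonormal n (Suc m) (u(m := w))"
  unfolding orthonormal_def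
proof (intro allI impI)
  fix k l assume k: "k < Suc m" and l: "l < Suc m"
  show "dot n ((u(m := w)) k) ((u(m := w)) l) = (if k = l then 1 else 0)"
  proof (cases "k = m")
    case True
    show ?thesis
    proof (cases "l = m")
      case True thus ?thesis using \<open>k = m\<close> w by simp
    next
      case False
      hence "l < m" using l by simp
      thus ?thesis using \<open>k = m\<close> False wu[of l] dot_comm[of n w "u l"] by simp
    qed
  next
    case False
    hence km: "k < m" using k by simp
    show ?thesis
    proof (cases "l = m")
      case True thus ?thesis using False km wu by simp
    next
      case False
      hence "l < m" using l by simp
      thus ?thesis using \<open>k \<noteq> m\<close> False km on unfolding orthonormal_def by simp
    qed
  qed
qed

lemma orthonormal_complete: assumes "orthonormal n n u" "i < n" "j < n"
  shows "(\<Sum>k<n. u k i * u k j) = (if i = j then 1 else 0)"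
proof -
  let ?r = "residual n n u (std_basis j)"
  have "dot n ?r ?r = 0"
  proof (rule ccontr)
    assume nz: "dot n ?r ?r \<noteq> 0"
    have pos: "dot n ?r ?r > 0" using nz dot_self_nonneg[of n ?r] by linarith
    define u' where "u' = u(n := (\<lambda>i. ?r i / sqrt (dot n ?r ?r)))"
    have "dot n (\<lambda>i. ?r i / sqrt (dot n ?r ?r)) (\<lambda>i. ?r i / sqrt (dot n ?r ?r)) = 1"
      using div_sqrt_div_sqrt_self[OF pos] by (simp add: dot_div_left dot_div_right)
    moreover have "dot n (u l) (\<lambda>i. ?r i / sqrt (dot n ?r ?r)) = 0" if "l < n" for l
      using residual_orth[OF assms(1) that] by (simp add: dot_div_right)
    ultimately have "orthonormal n (Suc n) u'"
      unfolding u'_def by (intro orthonormal_extend[OF assms(1)]) auto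
    from orthonormal_le[OF this] show False by simp
  qed
  hence "?r i = 0" using dot_self_zero assms by blast
  hence "std_basis j i - (\<Sum>k<n. dot n (u k) (std_basis j) * u k i) = 0" unfolding residual_def .
  moreover have "(\<Sum>k<n. dot n (u k) (std_basis j) * u k i) = (\<Sum>k<n. u k i * u k j)"
    using assms(3) by (simp add: dot_std_basis mult.commute)
  ultimately have "(\<Sum>k<n. u k i * u k j) = std_basis j i" by simp
  thus ?thesis by (simp add: std_basis_def)
qed

section \<open>The spectral theorem for symmetric matrices\<close>

lemma continuous_on_dot_left: "continuous_on UNIV (\<lambda>x::nat\<Rightarrow>real. dot n a x)"
  unfolding dot_def by (intro continuous_intros continuous_on_product_coordinates)

lemma continuous_on_quadratic_form: "continuous_on UNIV (\<lambda>x::nat\<Rightarrow>real. dot n x (matvec n M x))"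
  unfolding dot_def matvec_def by (intro continuous_intros continuous_on_product_coordinates)

lemma continuous_on_dot_self: "continuous_on UNIV (\<lambda>x::nat\<Rightarrow>real. dot n x x)"
  unfolding dot_def by (intro continuous_intros continuous_on_product_coordinates)

lemma compact_box_PiE: "compact (PiE UNIV (\<lambda>i::nat. if i < n then {-1..1::real} else {0}))"
proof -
  have "compactin (product_topology (\<lambda>i. euclidean) UNIV) (PiE UNIV (\<lambda>i::nat. if i < n then {-1..1::real} else {0}))"
    by (subst compactin_PiE) auto
  thus ?thesis by (simp add: euclidean_product_topology)
qed

lemma square_le_dot: "i < n \<Longrightarrow> (x i)^2 \<le> dot n x x"
  unfolding dot_def power2_eq_square by (rule member_le_sum) auto

text \<open>Vanishing beyond \<open>n\<close> makes this set compact in the product topology.\<close>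
definition unit_sphere_perp :: "nat \<Rightarrow> nat \<Rightarrow> (nat \<Rightarrow> nat \<Rightarrow> real) \<Rightarrow> (nat \<Rightarrow> real) set" where
  "unit_sphere_perp n m u = {x. (\<forall>i. n \<le> i \<longrightarrow> x i = 0) \<and> (\<forall>k<m. dot n (u k) x = 0) \<and> dot n x x = 1}"

lemma compact_unit_sphere_perp: "compact (unit_sphere_perp n m u)"
proof -
  have sub: "unit_sphere_perp n m u = PiE UNIV (\<lambda>i::nat. if i < n then {-1..1::real} else {0}) \<inter>
     ((\<Inter>i\<in>{n..}. {x. x i = 0}) \<inter> (\<Inter>k\<in>{..<m}. {x. dot n (u k) x = 0}) \<inter> {x. dot n x x = 1})"
  proof (intro equalityI subsetI)
    fix x assume x: "x \<in> unit_sphere_perp n m u"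
    have "x i \<in> {-1..1}" if "i < n" for i
    proof -
      have "(x i)^2 \<le> 1" using square_le_dot[OF that, of x] x unfolding unit_sphere_perp_def by simp
      thus ?thesis using abs_square_le_1[of "x i"] by auto
    qed
    thus "x \<in> PiE UNIV (\<lambda>i::nat. if i < n then {-1..1::real} else {0}) \<inter>
     ((\<Inter>i\<in>{n..}. {x. x i = 0}) \<inter> (\<Inter>k\<in>{..<m}. {x. dot n (u k) x = 0}) \<inter> {x. dot n x x = 1})"
      using x unfolding unit_sphere_perp_def by (auto simp: PiE_iff)
  qed (auto simp: unit_sphere_perp_def)
  show ?thesis unfolding sub
    by (intro compact_Int_closed compact_box_PiE closed_Int closed_INT closed_Collect_eq
        continuous_on_product_coordinates continuous_on_dot_left continuous_on_dot_self continuous_on_const ballI)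
qed

lemma zero_if_linear_le_quadratic: fixes c D :: real assumes "\<And>t. 2 * t * c \<le> t^2 * D" shows "c = 0"
proof (rule ccontr)
  assume c: "c \<noteq> 0"
  define e where "e = 1 / (\<bar>D\<bar> + 1)"
  have e: "e > 0" unfolding e_def by simp
  have c2: "e * c^2 > 0" using c e by simp
  have "2 * (e * c) * c \<le> (e * c)^2 * D" by (rule assms)
  hence "(e * c^2) * 2 \<le> (e * c^2) * (e * D)" by (simp add: power2_eq_square algebra_simps)
  hence "2 \<le> e * D" using c2 by (simp add: mult_le_cancel_left_pos)
  moreover have "e * D < 1"
  proof -
    have "e * D \<le> e * \<bar>D\<bar>" using e by (intro mult_left_mono) auto
    also have "\<dots> < e * (\<bar>D\<bar> + 1)" using e by simp
    also have "\<dots> = 1" unfolding e_def by simp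
    finally show ?thesis .
  qed
  ultimately show False by linarith
qed

lemma quadratic_form_le_max:
  assumes vmax: "\<And>x. x \<in> unit_sphere_perp n m u \<Longrightarrow> dot n x (matvec n M x) \<le> q"
    and zs: "\<And>i. n \<le> i \<Longrightarrow> z i = 0" and zu: "\<And>k. k < m \<Longrightarrow> dot n (u k) z = 0"
    and zpos: "dot n z z > 0"
  shows "dot n z (matvec n M z) \<le> q * dot n z z"
proof -
  define s where "s = sqrt (dot n z z)"
  have ss: "s * s = dot n z z" using zpos unfolding s_def by simp
  define w where "w = (\<lambda>i. z i / s)"
  have "dot n w w = dot n z z / s / s" unfolding w_def by (simp add: dot_div_left dot_div_right)
  also have "\<dots> = 1" unfolding s_def by (rule div_sqrt_div_sqrt_self[OF zpos])
  finally have "w \<in> unit_sphere_perp n m u"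
    unfolding unit_sphere_perp_def w_def using zs zu by (auto simp: dot_div_right)
  hence "dot n w (matvec n M w) \<le> q" by (rule vmax)
  moreover have "matvec n M w = (\<lambda>i. matvec n M z i / s)"
    unfolding w_def matvec_def by (simp add: sum_divide_distrib)
  hence "dot n w (matvec n M w) = dot n z (matvec n M z) / (s * s)"
    unfolding w_def by (simp add: dot_div_left dot_div_right)
  ultimately show ?thesis using zpos ss by (simp add: divide_le_eq mult.commute)
qed

text \<open>Perturbing \<open>v\<close> by \<open>t y\<close> changes the Rayleigh quotient by \<open>2 t (y, M v) + O(t\<^sup>2)\<close>;
  maximality forces \<open>(y, M v) = 0\<close>.\<close>
lemma rayleigh_maximizer_stationary:
  assumes S: "symmetric_matrix n M" and vK: "v \<in> unit_sphere_perp n m u"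
    and vmax: "\<And>x. x \<in> unit_sphere_perp n m u \<Longrightarrow> dot n x (matvec n M x) \<le> dot n v (matvec n M v)"
    and ys: "\<And>i. n \<le> i \<Longrightarrow> y i = 0" and yu: "\<And>k. k < m \<Longrightarrow> dot n (u k) y = 0"
    and yv: "dot n v y = 0"
  shows "dot n y (matvec n M v) = 0"
proof -
  define q where "q = dot n v (matvec n M v)"
  have vv: "dot n v v = 1" and vs: "\<And>i. n \<le> i \<Longrightarrow> v i = 0"
    and vu: "\<And>k. k < m \<Longrightarrow> dot n (u k) v = 0"
    using vK unfolding unit_sphere_perp_def by simp_all
  show ?thesis
  proof (rule zero_if_linear_le_quadratic[where D = "q * dot n y y - dot n y (matvec n M y)"])
    fix t :: real
    define z where "z = (\<lambda>i. v i + t * y i)"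
    have zz: "dot n z z = 1 + t^2 * dot n y y"
      unfolding z_def using vv yv
      by (simp add: dot_add_left dot_add_right dot_scale_left dot_scale_right dot_comm[of n y v] power2_eq_square algebra_simps)
    have "dot n z (matvec n M z) \<le> q * dot n z z"
    proof (rule quadratic_form_le_max[where m = m and u = u])
      show "dot n z z > 0" unfolding zz using dot_self_nonneg[of n y] by (simp add: add_pos_nonneg)
    qed (use vmax q_def vs ys vu yu in \<open>auto simp: z_def dot_add_right dot_scale_right\<close>)
    moreover have "matvec n M z = (\<lambda>i. matvec n M v i + t * matvec n M y i)"
      unfolding z_def by (rule ext, rule matvec_lin)
    moreover have "dot n y (matvec n M v) = dot n v (matvec n M y)"
      using dot_matvec_symmetric[OF S, of y v] dot_comm[of n "matvec n M y" v] by simp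
    ultimately have "q + 2 * t * dot n y (matvec n M v) + t^2 * dot n y (matvec n M y) \<le> q * (1 + t^2 * dot n y y)"
      unfolding zz unfolding z_def q_def using vv yv dot_comm[of n y v]
      by (simp add: dot_add_left dot_add_right dot_scale_left dot_scale_right power2_eq_square algebra_simps)
    thus "2 * t * dot n y (matvec n M v) \<le> t^2 * (q * dot n y y - dot n y (matvec n M y))"
      by (simp add: algebra_simps)
  qed
qed

lemma rayleigh_maximizer_is_eigenvector:
  assumes S: "symmetric_matrix n M" and on: "orthonormal n m u"
    and ev: "\<And>k i. k < m \<Longrightarrow> i < n \<Longrightarrow> matvec n M (u k) i = \<mu> k * u k i"
    and vK: "v \<in> unit_sphere_perp n m u"
    and vmax: "\<And>x. x \<in> unit_sphere_perp n m u \<Longrightarrow> dot n x (matvec n M x) \<le> dot n v (matvec n M v)"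
  shows "\<And>i. i < n \<Longrightarrow> matvec n M v i = dot n v (matvec n M v) * v i"
proof -
  define q where "q = dot n v (matvec n M v)"
  define y where "y = (\<lambda>i. if i < n then matvec n M v i - q * v i else 0)"
  have ys: "\<And>i. n \<le> i \<Longrightarrow> y i = 0" unfolding y_def by simp
  have yeq: "dot n a y = dot n a (matvec n M v) - q * dot n a v" for a
  proof -
    have "dot n a y = dot n a (\<lambda>i. matvec n M v i - q * v i)" by (rule dot_cong) (auto simp: y_def)
    thus ?thesis by (simp add: dot_diff_right dot_scale_right)
  qed
  have vu: "\<And>k. k < m \<Longrightarrow> dot n (u k) v = 0" using vK unfolding unit_sphere_perp_def by simp
  have yu: "dot n (u k) y = 0" if k: "k < m" for k
  proof -
    have "dot n (u k) (matvec n M v) = dot n (matvec n M (u k)) v" by (rule dot_matvec_symmetric[OF S])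
    also have "\<dots> = dot n (\<lambda>i. \<mu> k * u k i) v" by (rule dot_cong) (auto simp: ev k)
    finally show ?thesis using yeq vu[OF k] by (simp add: dot_scale_left)
  qed
  have vv: "dot n v v = 1" using vK unfolding unit_sphere_perp_def by simp
  have yv: "dot n v y = 0" using yeq[of v] vv unfolding q_def by simp
  have "dot n y y = 0" using rayleigh_maximizer_stationary[OF S vK vmax ys yu yv] yeq[of y] yv dot_comm[of n y v] by simp
  hence "y i = 0" if "i < n" for i using dot_self_zero that by blast
  thus "\<And>i. i < n \<Longrightarrow> matvec n M v i = dot n v (matvec n M v) * v i" unfolding y_def q_def by auto
qed

lemma unit_sphere_perp_nonempty: assumes "orthonormal n m u" "m < n" shows "unit_sphere_perp n m u \<noteq> {}"
proof -
  obtain j where j: "j < n" and nz: "dot n (residual n m u (std_basis j)) (residual n m u (std_basis j)) \<noteq> 0"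
    using orthonormal_nonspan[OF assms] by blast
  let ?r = "residual n m u (std_basis j)"
  have pos: "dot n ?r ?r > 0" using nz dot_self_nonneg[of n ?r] by linarith
  define c where "c = sqrt (dot n ?r ?r)"
  define x where "x = (\<lambda>i. if i < n then ?r i / c else 0)"
  have ipx: "dot n a x = dot n a ?r / c" for a
  proof -
    have "dot n a x = dot n a (\<lambda>i. ?r i / c)" by (rule dot_cong) (auto simp: x_def)
    thus ?thesis by (simp only: dot_div_right)
  qed
  have "dot n x x = dot n x ?r / c" by (rule ipx)
  also have "dot n x ?r = dot n ?r x" by (rule dot_comm)
  also have "dot n ?r x = dot n ?r ?r / c" by (rule ipx)
  also have "dot n ?r ?r / c / c = 1" unfolding c_def by (rule div_sqrt_div_sqrt_self[OF pos])
  finally have xx: "dot n x x = 1" .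
  have xs: "\<forall>i. n \<le> i \<longrightarrow> x i = 0" by (simp add: x_def)
  have xu: "\<forall>k<m. dot n (u k) x = 0" using residual_orth[OF assms(1)] by (simp add: ipx)
  have "x \<in> unit_sphere_perp n m u" unfolding unit_sphere_perp_def using xx xs xu by blast
  thus ?thesis by blast
qed

lemma exists_orthogonal_eigenvector:
  assumes S: "symmetric_matrix n M" and on: "orthonormal n m u" and mn: "m < n"
    and ev: "\<And>k i. k < m \<Longrightarrow> i < n \<Longrightarrow> matvec n M (u k) i = \<mu> k * u k i"
  shows "\<exists>v c. (\<forall>k<m. dot n (u k) v = 0) \<and> dot n v v = 1 \<and> (\<forall>i<n. matvec n M v i = c * v i)"
proof -
  have c: "continuous_on (unit_sphere_perp n m u) (\<lambda>x. dot n x (matvec n M x))"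
    by (rule continuous_on_subset[OF continuous_on_quadratic_form]) simp
  obtain v where vK: "v \<in> unit_sphere_perp n m u" and vmax: "\<forall>x\<in>unit_sphere_perp n m u. dot n x (matvec n M x) \<le> dot n v (matvec n M v)"
    using continuous_attains_sup[OF compact_unit_sphere_perp unit_sphere_perp_nonempty[OF on mn] c] by blast
  have "\<And>i. i < n \<Longrightarrow> matvec n M v i = dot n v (matvec n M v) * v i"
    by (rule rayleigh_maximizer_is_eigenvector[OF S on ev vK]) (use vmax in auto)
  thus ?thesis using vK unfolding unit_sphere_perp_def by blast
qed

lemma orthonormal_eigenvectors_exist:
  assumes S: "symmetric_matrix n M" and u0: "dot n u0 u0 = 1"
    and ev0: "\<And>i. i < n \<Longrightarrow> matvec n M u0 i = \<mu>0 * u0 i"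
    and m: "1 \<le> m" "m \<le> n"
  shows "\<exists>u \<mu>. u 0 = u0 \<and> \<mu> 0 = \<mu>0 \<and> orthonormal n m u \<and>
      (\<forall>k<m. \<forall>i<n. matvec n M (u k) i = \<mu> k * u k i)"
  using m
proof (induction m rule: dec_induct)
  case base
  show ?case using u0 ev0 by (intro exI[of _ "\<lambda>_. u0"] exI[of _ "\<lambda>_. \<mu>0"]) (auto simp: orthonormal_def)
next
  case (step j)
  then obtain u \<mu> where u: "u 0 = u0" "\<mu> 0 = \<mu>0" "orthonormal n j u"
      and ev: "\<forall>k<j. \<forall>i<n. matvec n M (u k) i = \<mu> k * u k i"
    by auto
  obtain v c where v: "\<forall>k<j. dot n (u k) v = 0" "dot n v v = 1" "\<forall>i<n. matvec n M v i = c * v i"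
    using exists_orthogonal_eigenvector[OF S u(3), of \<mu>] step.hyps m(2) ev by auto
  have "orthonormal n (Suc j) (u(j := v))"
    by (rule orthonormal_extend[OF u(3) v(2)]) (use v(1) in auto)
  moreover have "\<forall>k<Suc j. \<forall>i<n. matvec n M ((u(j := v)) k) i = (\<mu>(j := c)) k * (u(j := v)) k i"
    using ev v(3) by (auto simp: less_Suc_eq)
  moreover have "(u(j := v)) 0 = u0" "(\<mu>(j := c)) 0 = \<mu>0" using u(1,2) step.hyps by auto
  ultimately show ?case by blast
qed

section \<open>A convexity estimate\<close>

lemma inverse_one_minus_le_chord:
  fixes p q x :: real assumes "p \<le> x" "x \<le> q" "q < 1"
  shows "1 / (1 - x) \<le> 1 / (1 - p) + (x - p) / ((1 - p) * (1 - q))"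
proof -
  have a: "1 - p > 0" "1 - q > 0" "1 - x > 0" using assms by auto
  have "1 / (1 - p) + (x - p) / ((1 - p) * (1 - q)) - 1 / (1 - x)
     = (x - p) * (q - x) / ((1 - p) * (1 - q) * (1 - x))"
  proof -
    have "1 / a + (a - c) / (a * b) - 1 / c = (a - c) * (c - b) / (a * b * c)"
      if "a > 0" "b > 0" "c > 0" for a b c :: real
      using that by (simp add: field_simps)
    from this[OF a] show ?thesis by simp
  qed
  moreover have "(x - p) * (q - x) / ((1 - p) * (1 - q) * (1 - x)) \<ge> 0"
    using a assms by (intro divide_nonneg_pos mult_nonneg_nonneg) auto
  ultimately show ?thesis by linarith
qed

lemma sum_excess_below_le:
  fixes x :: "nat \<Rightarrow> real" and K t l :: real
  assumes fin: "finite I" and rng: "\<And>i. i \<in> I \<Longrightarrow> -1 \<le> x i \<and> x i \<le> l"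
    and sum: "(\<Sum>i\<in>I. x i) = -1" and tl: "t \<le> l"
    and teq: "t = K - 1 - (real (card I) - K - 1) * l" and Kint: "K \<in> \<int>" and tm: "-1 \<le> t"
  shows "(\<Sum>i\<in>I. max 0 (t - x i)) \<le> K * (t + 1)"
proof -
  define P where "P = {i\<in>I. x i < t}"
  define n where "n = real (card I)"
  have finP: "finite P" using fin unfolding P_def by simp
  have PI: "P \<subseteq> I" unfolding P_def by auto
  have eq1: "(\<Sum>i\<in>I. max 0 (t - x i)) = (\<Sum>i\<in>P. t - x i)"
  proof -
    have "(\<Sum>i\<in>I. max 0 (t - x i)) = (\<Sum>i\<in>P. max 0 (t - x i))"
      using fin PI by (intro sum.mono_neutral_right) (auto simp: P_def)
    also have "\<dots> = (\<Sum>i\<in>P. t - x i)" by (intro sum.cong) (auto simp: P_def)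
    finally show ?thesis .
  qed
  have b1: "(\<Sum>i\<in>P. t - x i) \<le> real (card P) * (t + 1)"
  proof -
    have "(\<Sum>i\<in>P. t - x i) \<le> (\<Sum>i\<in>P. t + 1)" using rng PI by (intro sum_mono) force
    thus ?thesis by simp
  qed
  have b2: "(\<Sum>i\<in>P. t - x i) \<le> n * t + 1 + (n - real (card P)) * (l - t)"
  proof -
    have split: "(\<Sum>i\<in>I. t - x i) = (\<Sum>i\<in>P. t - x i) + (\<Sum>i\<in>I-P. t - x i)"
      using sum.subset_diff[OF PI fin, of "\<lambda>i. t - x i"] by linarith
    have "(\<Sum>i\<in>I. t - x i) = n * t + 1" using sum unfolding n_def by (simp add: sum_subtractf)
    moreover have "(\<Sum>i\<in>I-P. x i - t) \<le> (\<Sum>i\<in>I-P. l - t)" using rng by (intro sum_mono) auto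
    moreover have "card (I - P) = card I - card P" using fin PI by (simp add: card_Diff_subset finite_subset)
    moreover have "card P \<le> card I" using fin PI by (simp add: card_mono)
    ultimately show ?thesis using split by (simp add: sum_subtractf n_def of_nat_diff)
  qed
  show ?thesis
  proof (cases "real (card P) \<le> K")
    case True
    have "real (card P) * (t + 1) \<le> K * (t + 1)" using True tm by (intro mult_right_mono) auto
    thus ?thesis unfolding eq1 using b1 by linarith
  next
    case False
    from Kint obtain z where z: "K = of_int z" by (auto elim: Ints_cases)
    have "of_int z < (of_int (int (card P)) :: real)" using False z by simp
    hence "z < int (card P)" by (simp only: of_int_less_iff)
    hence "z + 1 \<le> int (card P)" by simp
    hence "of_int (z + 1) \<le> (of_int (int (card P)) :: real)" by (simp only: of_int_le_iff)
    hence "real (card P) \<ge> K + 1" unfolding z by simp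
    hence "(n - real (card P)) * (l - t) \<le> (n - K - 1) * (l - t)" using tl by (intro mult_right_mono) auto
    moreover have "n * t + 1 + (n - K - 1) * (l - t) = K * (t + 1)" using teq unfolding n_def by (simp add: algebra_simps)
    ultimately show ?thesis unfolding eq1 using b2 by linarith
  qed
qed

lemma inverse_one_minus_le_two_chords:
  fixes t l y :: real
  assumes "-1 \<le> y" "y \<le> l" "-1 < t" "t \<le> l" "l < 1"
  shows "1 / (1 - y) \<le> 1 / (1 - t) + (y - t) / ((1 - t) * (1 - l))
           + (1 / ((1 - t) * (1 - l)) - 1 / (2 * (1 - t))) * max 0 (t - y)"
proof (cases "y \<le> t")
  case True
  have "1 / (1 - y) \<le> 1 / (1 - (-1)) + (y - (-1)) / ((1 - (-1)) * (1 - t))"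
    by (rule inverse_one_minus_le_chord) (use assms True in auto)
  moreover have "1 / (1 - (-1)) + (y - (-1)) / ((1 - (-1)) * (1 - t))
      = 1 / (1 - t) + (y - t) / ((1 - t) * (1 - l))
        + (1 / ((1 - t) * (1 - l)) - 1 / (2 * (1 - t))) * (t - y)"
  proof -
    have "1 / 2 + (y + 1) / (2 * a) = 1 / a + (y - (1 - a)) / (a * b)
        + (1 / (a * b) - 1 / (2 * a)) * ((1 - a) - y)" if "a \<noteq> 0" "b \<noteq> 0" for a b :: real
      using that by (simp add: field_simps)
    from this[of "1 - t" "1 - l"] assms show ?thesis by simp
  qed
  ultimately show ?thesis using True by (simp add: max_def)
next
  case False
  have "1 / (1 - y) \<le> 1 / (1 - t) + (y - t) / ((1 - t) * (1 - l))"
    by (rule inverse_one_minus_le_chord) (use assms False in auto)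
  thus ?thesis using False by simp
qed

lemma floor_theta_bounds:
  fixes l :: real and N :: nat
  assumes "-1 < l"
  defines "k \<equiv> \<lfloor>(l * (real N - 1) + 1) / (l + 1)\<rfloor>"
  defines "theta \<equiv> l * (real N - real_of_int k - 2) - real_of_int k + 2"
  shows "1 - l \<le> theta" and "theta < 2"
proof -
  have lp: "l + 1 > 0" using assms(1) by simp
  have "real_of_int k \<le> (l * (real N - 1) + 1) / (l + 1)"
    and "(l * (real N - 1) + 1) / (l + 1) < real_of_int k + 1"
    unfolding k_def by linarith+
  hence "real_of_int k * (l + 1) \<le> l * (real N - 1) + 1"
    and "l * (real N - 1) + 1 < (real_of_int k + 1) * (l + 1)"
    using lp by (simp_all add: le_divide_eq divide_less_eq)
  thus "1 - l \<le> theta" "theta < 2" unfolding theta_def by (simp_all add: algebra_simps)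
qed

lemma two_chord_majorant_value:
  fixes t l K :: real and N :: nat
  assumes t1: "t < 1" and l1: "l < 1" and t_eq: "t = K - 1 - (real N - K - 2) * l"
  shows "(real N - 1) / (1 - t) + 1 / ((1 - t) * (1 - l)) * (-1 - (real N - 1) * t)
      + (1 / ((1 - t) * (1 - l)) - 1 / (2 * (1 - t))) * (K * (t + 1))
    = (real N - K - 2) / (1 - l) + K / 2 + 1 / (1 - t)"
proof -
  define a b where "a = 1 - t" and "b = 1 - l"
  have anz: "a \<noteq> 0" "b \<noteq> 0" using t1 l1 unfolding a_def b_def by simp_all
  have tt: "t = 1 - a" "l = 1 - b" unfolding a_def b_def by simp_all
  have rel: "a = real N - 2*K - b*real N + b*K + 2*b"
    unfolding a_def b_def t_eq by (simp add: algebra_simps)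
  have "(real N - 1) / (1 - t) + 1 / ((1 - t) * (1 - l)) * (-1 - (real N - 1) * t)
      + (1 / ((1 - t) * (1 - l)) - 1 / (2 * (1 - t))) * (K * (t + 1))
      - ((real N - K - 2) / (1 - l) + K / 2 + 1 / (1 - t))
     = (a + b*real N - 2*b - real N + 2*K - b*K) / (a * b)"
    using anz by (simp add: tt field_simps)
  also have "a + b*real N - 2*b - real N + 2*K - b*K = 0" using rel by simp
  finally show ?thesis by simp
qed

text \<open>The extremal configuration has \<open>N - k - 2\<close> values at \<open>l\<close>, \<open>k\<close> at \<open>-1\<close>
  and one at \<open>1 - \<theta>\<close>. The proof replaces \<open>1 / (1 - x)\<close> by its two-chord majorant with
  break point \<open>t = 1 - \<theta>\<close>; its sum is linear in the \<open>x i\<close> except for the excess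
  \<open>\<Sum> max 0 (t - x i)\<close>, which \<open>sum_excess_below_le\<close> controls.\<close>
lemma sum_inverse_one_minus_le:
  fixes x :: "nat \<Rightarrow> real" and l :: real and N :: nat
  assumes fin: "finite I" and cI: "card I = N - 1" and N: "N \<ge> 2"
    and rng: "\<And>i. i \<in> I \<Longrightarrow> -1 \<le> x i \<and> x i \<le> l" and l1: "l < 1"
    and sum: "(\<Sum>i\<in>I. x i) = -1"
  defines "k \<equiv> \<lfloor>(l * (real N - 1) + 1) / (l + 1)\<rfloor>"
  defines "theta \<equiv> l * (real N - real_of_int k - 2) - real_of_int k + 2"
  shows "(\<Sum>i\<in>I. 1 / (1 - x i)) \<le> (real N - real_of_int k - 2) / (1 - l) + real_of_int k / 2 + 1 / theta"
proof (cases "l = -1")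
  case True
  hence xi: "x i = -1" if "i \<in> I" for i using rng[OF that] by auto
  hence "(\<Sum>i\<in>I. x i) = - real (card I)" by simp
  hence cI1: "card I = 1" using sum by simp
  hence N2: "N = 2" using cI N by simp
  have k0: "k = 0" unfolding k_def True by simp
  have "(\<Sum>i\<in>I. 1 / (1 - x i)) = (\<Sum>i\<in>I. 1/2)" using xi by (intro sum.cong) auto
  also have "\<dots> = 1/2" using cI1 by simp
  finally show ?thesis unfolding theta_def k0 N2 True by simp
next
  case False
  have "I \<noteq> {}" using cI N by auto
  then obtain i0 where "i0 \<in> I" by blast
  hence lm: "l > -1" using rng[of i0] False by linarith
  define K where "K = real_of_int k"
  define n where "n = real N - 1"
  have cIr: "real (card I) = n" using cI N unfolding n_def by (simp add: of_nat_diff)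
  define t where "t = 1 - theta"
  have tl: "t \<le> l" and tm: "-1 < t"
    using floor_theta_bounds[OF lm, of N] unfolding t_def theta_def k_def by simp_all
  have t_eq: "t = K - 1 - (real N - K - 2) * l" unfolding t_def theta_def K_def by simp
  have t1: "1 - t > 0" using tl l1 by simp
  define s1 where "s1 = 1 / (2 * (1 - t))"
  define s2 where "s2 = 1 / ((1 - t) * (1 - l))"
  have s12: "s1 \<le> s2"
  proof -
    have "(1 - t) * (1 - l) \<le> 2 * (1 - t)"
      using mult_nonneg_nonneg[of "1 + l" "1 - t"] t1 lm by (simp add: algebra_simps)
    thus ?thesis unfolding s1_def s2_def using t1 l1 lm
      by (intro divide_left_mono mult_pos_pos) auto
  qed
  have "1 / (1 - x i) \<le> 1 / (1 - t) + s2 * (x i - t) + (s2 - s1) * max 0 (t - x i)" if "i \<in> I" for i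
  proof -
    have "(x i - t) / ((1 - t) * (1 - l)) = s2 * (x i - t)" unfolding s2_def by simp
    thus ?thesis using inverse_one_minus_le_two_chords[of "x i" l t] rng[OF that] tm tl l1
      unfolding s1_def s2_def by simp
  qed
  hence "(\<Sum>i\<in>I. 1 / (1 - x i))
      \<le> (\<Sum>i\<in>I. 1 / (1 - t) + s2 * (x i - t) + (s2 - s1) * max 0 (t - x i))"
    by (intro sum_mono)
  also have "\<dots> = n / (1 - t) + s2 * (-1 - n * t) + (s2 - s1) * (\<Sum>i\<in>I. max 0 (t - x i))"
    using sum cIr by (simp add: sum.distrib sum_subtractf sum_distrib_left[symmetric] algebra_simps)
  also have "\<dots> \<le> n / (1 - t) + s2 * (-1 - n * t) + (s2 - s1) * (K * (t + 1))"
  proof -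
    have "(\<Sum>i\<in>I. max 0 (t - x i)) \<le> K * (t + 1)"
      by (rule sum_excess_below_le[OF fin rng sum tl]) (use tm in \<open>auto simp: cIr t_eq n_def K_def\<close>)
    thus ?thesis using s12 by (simp add: mult_left_mono)
  qed
  also have "\<dots> = (real N - K - 2) / (1 - l) + K / 2 + 1 / (1 - t)"
    unfolding s1_def s2_def n_def by (rule two_chord_majorant_value) (use t1 l1 t_eq in auto)
  finally show ?thesis unfolding t_def K_def by simp
qed

lemma sum_pairs_eq_half:
  fixes F :: "nat \<Rightarrow> nat \<Rightarrow> real"
  assumes sym: "\<And>i j. F i j = F j i" and diag: "\<And>i. F i i = 0"
  shows "(\<Sum>(i, j)\<in>{(i, j). i < j \<and> j < n}. F i j) = (\<Sum>i<n. \<Sum>j<n. F i j) / 2"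
proof (induction n)
  case 0 thus ?case by simp
next
  case (Suc n)
  have set: "{(i, j). i < j \<and> j < Suc n} = {(i, j). i < j \<and> j < n} \<union> (\<lambda>i. (i, n)) ` {..<n}"
    by auto
  have fin: "finite {(i, j). i < j \<and> j < n}"
    by (rule finite_subset[of _ "{..<n} \<times> {..<n}"]) auto
  have disj: "{(i, j). i < j \<and> j < n} \<inter> (\<lambda>i. (i, n)) ` {..<n} = {}" by auto
  have "(\<Sum>(i, j)\<in>{(i, j). i < j \<and> j < Suc n}. F i j)
      = (\<Sum>(i, j)\<in>{(i, j). i < j \<and> j < n}. F i j) + (\<Sum>(i, j)\<in>(\<lambda>i. (i, n)) ` {..<n}. F i j)"
    unfolding set by (rule sum.union_disjoint) (use fin disj in auto)
  also have "(\<Sum>(i, j)\<in>(\<lambda>i. (i, n)) ` {..<n}. F i j) = (\<Sum>i<n. F i n)"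
    by (subst sum.reindex) (auto simp: inj_on_def)
  also have "(\<Sum>i<Suc n. \<Sum>j<Suc n. F i j) = (\<Sum>i<n. \<Sum>j<n. F i j) + 2 * (\<Sum>i<n. F i n)"
    by (simp add: sum.distrib diag sym[of n])
  ultimately show ?case using Suc.IH by simp
qed

lemma sum_weighted_square_diff:
  fixes d a :: "nat \<Rightarrow> real"
  shows "(\<Sum>i<n. \<Sum>j<n. (d i + d j) * (a i - a j)^2) =
    2 * real n * (\<Sum>i<n. d i * (a i)^2) + 2 * (\<Sum>i<n. d i) * (\<Sum>i<n. (a i)^2) - 4 * (\<Sum>i<n. d i * a i) * (\<Sum>i<n. a i)"
proof -
  have eq: "(d i + d j) * (a i - a j)^2 = (d i * (a i)^2) * 1 + d i * (a j)^2 + (-2 * (d i * a i)) * a j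
      + (a i)^2 * d j + 1 * (d j * (a j)^2) + (-2 * a i) * (d j * a j)" for i j
    by (simp add: power2_eq_square algebra_simps)
  have "(\<Sum>i<n. \<Sum>j<n. (d i + d j) * (a i - a j)^2) =
     (\<Sum>i<n. d i * (a i)^2) * (\<Sum>j<n. 1) + (\<Sum>i<n. d i) * (\<Sum>j<n. (a j)^2) + (\<Sum>i<n. -2 * (d i * a i)) * (\<Sum>j<n. a j)
     + (\<Sum>i<n. (a i)^2) * (\<Sum>j<n. d j) + (\<Sum>i<n. 1) * (\<Sum>j<n. d j * (a j)^2) + (\<Sum>i<n. -2 * a i) * (\<Sum>j<n. d j * a j)"
    by (simp only: eq sum.distrib sum_product)
  moreover have "(\<Sum>i<n. -2 * (d i * a i)) = -2 * (\<Sum>i<n. d i * a i)" by (simp add: sum_distrib_left)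
  moreover have "(\<Sum>i<n. -2 * a i) = -2 * (\<Sum>i<n. a i)" by (simp add: sum_distrib_left)
  moreover have "(\<Sum>i<n. 1::real) = real n" by simp
  ultimately show ?thesis by (simp add: algebra_simps)
qed

lemma mat_mult_mat_entry: fixes f g :: "nat \<times> nat \<Rightarrow> 'a::comm_semiring_1"
  assumes "i < n" "j < n"
  shows "(mat n n f * mat n n g) $$ (i, j) = (\<Sum>l<n. f (i, l) * g (l, j))"
  using assms by (simp add: scalar_prod_def lessThan_atLeast0)

lemma prod_list_map_upt: "(\<Prod>a\<leftarrow>map f [0..<n]. g a) = (\<Prod>k<n. g (f k))"
  by (induction n) (simp_all add: mult.commute)

lemma order_prod_linear_factors: fixes \<mu> :: "nat \<Rightarrow> real" assumes "finite K"
  shows "order y (\<Prod>k\<in>K. [:- \<mu> k, 1:]) = card {k\<in>K. \<mu> k = y}"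
  using assms
proof (induction K rule: finite_induct)
  case empty thus ?case by simp
next
  case (insert k F)
  have h1: "[:- \<mu> k, 1:] \<noteq> 0" by simp
  have h2: "(\<Prod>k\<in>F. [:- \<mu> k, 1:]) \<noteq> 0" using insert(1) by (subst prod_zero_iff) auto
  have nz: "[:- \<mu> k, 1:] * (\<Prod>k\<in>F. [:- \<mu> k, 1:]) \<noteq> 0" using h1 h2 mult_eq_0_iff by blast
  have pi: "(\<Prod>k'\<in>insert k F. [:- \<mu> k', 1:]) = [:- \<mu> k, 1:] * (\<Prod>k\<in>F. [:- \<mu> k, 1:])"
    by (rule prod.insert) (use insert in auto)
  have o1: "order y [:- \<mu> k, 1:] = (if \<mu> k = y then 1 else 0)"
  proof (cases "\<mu> k = y")
    case True thus ?thesis using order_power_n_n[of y 1] by simp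
  next
    case False
    have "poly [:- \<mu> k, 1:] y \<noteq> 0" using False by simp
    thus ?thesis using False by (simp add: order_0I)
  qed
  have "{k'\<in>insert k F. \<mu> k' = y} = (if \<mu> k = y then insert k {k'\<in>F. \<mu> k' = y} else {k'\<in>F. \<mu> k' = y})"
    by auto
  hence c: "card {k'\<in>insert k F. \<mu> k' = y} = (if \<mu> k = y then 1 else 0) + card {k'\<in>F. \<mu> k' = y}"
    using insert(1,2) by simp
  show ?case unfolding pi order_mult[OF nz] o1 c insert(3) ..
qed

section \<open>Connected graphs and the normalized adjacency matrix\<close>

locale connected_simple_graph =
  fixes N :: nat and E :: "nat \<Rightarrow> nat \<Rightarrow> bool"
  assumes sg: "simple_graph N E" and cg: "connected_graph N E" and N2: "N \<ge> 2"
begin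

definition A :: "nat \<Rightarrow> nat \<Rightarrow> real" where "A v w = (if E v w then 1 else 0)"
definition d :: "nat \<Rightarrow> real" where "d v = real (degree N E v)"
definition vol :: real where "vol = (\<Sum>v<N. d v)"
definition sqrt_d :: "nat \<Rightarrow> real" where "sqrt_d v = sqrt (d v)"
definition S :: "nat \<Rightarrow> nat \<Rightarrow> real" where "S v w = A v w / (sqrt_d v * sqrt_d w)"
definition u0 :: "nat \<Rightarrow> real" where "u0 v = sqrt_d v / sqrt vol"

lemma E_less_N: "E v w \<Longrightarrow> v < N \<and> w < N" using sg unfolding simple_graph_def by blast
lemma E_sym: "E v w \<Longrightarrow> E w v" using sg unfolding simple_graph_def by blast
lemma E_irr: "\<not> E v v" using sg unfolding simple_graph_def by blast

lemma A_sym: "A v w = A w v"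
proof -
  have "E v w = E w v" using E_sym by blast
  thus ?thesis unfolding A_def by simp
qed
lemma A_nonneg: "A v w \<ge> 0" unfolding A_def by simp
lemma A_diag: "A v v = 0" unfolding A_def using E_irr by simp

lemma d_sum: "d v = (\<Sum>w<N. A v w)"
proof -
  have "(\<Sum>w<N. A v w) = (\<Sum>w\<in>{..<N}. if E v w then 1 else 0)" by (simp add: A_def)
  also have "\<dots> = (\<Sum>w\<in>{w\<in>{..<N}. E v w}. 1)" by (rule sum.inter_filter[symmetric]) simp
  also have "{w\<in>{..<N}. E v w} = {w. w < N \<and> E v w}" by auto
  finally show ?thesis unfolding d_def degree_def by simp
qed

lemma nbr_sum: "(\<Sum>w | w < N \<and> E v w. x w) = (\<Sum>w<N. A v w * x w)"
proof -
  have "(\<Sum>w<N. A v w * x w) = (\<Sum>w\<in>{..<N}. if E v w then x w else 0)"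
    by (intro sum.cong refl) (simp add: A_def)
  also have "\<dots> = (\<Sum>w\<in>{w\<in>{..<N}. E v w}. x w)" by (rule sum.inter_filter[symmetric]) simp
  also have "{w\<in>{..<N}. E v w} = {w. w < N \<and> E v w}" by auto
  finally show ?thesis by simp
qed

lemma d_nonneg: "d v \<ge> 0" unfolding d_def by simp

lemma d_pos: assumes "v < N" shows "d v \<ge> 1"
proof -
  define w where "w = (if v = 0 then 1 else 0::nat)"
  have w: "w < N" "w \<noteq> v" using N2 unfolding w_def by auto
  have "E\<^sup>*\<^sup>* v w" using cg assms w unfolding connected_graph_def by blast
  then obtain y where "E v y"
    by (rule converse_rtranclpE) (use w in auto)
  hence "y \<in> {w. w < N \<and> E v w}" using E_less_N by blast
  hence ne: "{w. w < N \<and> E v w} \<noteq> {}" by blast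
  have fin: "finite {w. w < N \<and> E v w}" by simp
  have "0 < card {w. w < N \<and> E v w}" using ne fin by (simp only: card_gt_0_iff) simp
  hence "1 \<le> card {w. w < N \<and> E v w}" by simp
  thus ?thesis unfolding d_def degree_def by simp
qed

lemma sqrt_d_square: "sqrt_d v * sqrt_d v = d v" unfolding sqrt_d_def using d_nonneg[of v] by simp
lemma sqrt_d_pos: "v < N \<Longrightarrow> sqrt_d v > 0" unfolding sqrt_d_def using d_pos[of v] by simp

lemma vol_pos: "vol > 0"
proof -
  have "vol \<ge> (\<Sum>v<N. 1)" unfolding vol_def using d_pos by (intro sum_mono) auto
  thus ?thesis using N2 by simp
qed

lemma symmetric_S: "symmetric_matrix N S" unfolding symmetric_matrix_def S_def using A_sym by (simp add: mult.commute)

lemma S_diag: "S v v = 0" unfolding S_def A_diag by simp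

lemma const_along_edges:
  assumes h: "\<And>v w. E v w \<Longrightarrow> y v = y w" and v: "v < N"
  shows "y v = y 0"
proof -
  have "E\<^sup>*\<^sup>* 0 v" using cg v N2 unfolding connected_graph_def by auto
  hence "y 0 = y v" by (induction rule: rtranclp_induct) (auto dest: h)
  thus ?thesis by simp
qed

lemma sum_adj_square_combination:
  "(\<Sum>v<N. \<Sum>w<N. A v w * (z v + c * z w)^2)
     = (1 + c^2) * (\<Sum>v<N. d v * (z v)^2) + 2 * c * (\<Sum>v<N. \<Sum>w<N. A v w * z v * z w)"
proof -
  have e1: "(\<Sum>v<N. \<Sum>w<N. A v w * (z v)^2) = (\<Sum>v<N. d v * (z v)^2)"
    by (simp add: d_sum sum_distrib_right)
  have e2: "(\<Sum>v<N. \<Sum>w<N. A v w * (z w)^2) = (\<Sum>v<N. d v * (z v)^2)"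
    by (subst sum.swap) (simp add: d_sum sum_distrib_right A_sym)
  have "(\<Sum>v<N. \<Sum>w<N. A v w * (z v + c * z w)^2)
      = (\<Sum>v<N. \<Sum>w<N. A v w * (z v)^2 + c^2 * (A v w * (z w)^2) + 2 * c * (A v w * z v * z w))"
    by (intro sum.cong refl) (simp add: power2_eq_square algebra_simps)
  also have "\<dots> = (\<Sum>v<N. \<Sum>w<N. A v w * (z v)^2) + c^2 * (\<Sum>v<N. \<Sum>w<N. A v w * (z w)^2)
      + 2 * c * (\<Sum>v<N. \<Sum>w<N. A v w * z v * z w)"
    by (simp add: sum.distrib sum_distrib_left)
  finally show ?thesis using e1 e2 by (simp add: algebra_simps)
qed

lemma sum_adj_square_diff:
  "(\<Sum>v<N. \<Sum>w<N. A v w * (z v - z w)^2)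
     = 2 * (\<Sum>v<N. d v * (z v)^2) - 2 * (\<Sum>v<N. \<Sum>w<N. A v w * z v * z w)"
  using sum_adj_square_combination[of z "-1"] by simp

lemma sum_adj_square_add:
  "(\<Sum>v<N. \<Sum>w<N. A v w * (z v + z w)^2)
     = 2 * (\<Sum>v<N. d v * (z v)^2) + 2 * (\<Sum>v<N. \<Sum>w<N. A v w * z v * z w)"
  using sum_adj_square_combination[of z 1] by simp

lemma quadratic_form_S: "dot N x (matvec N S x) = (\<Sum>v<N. \<Sum>w<N. A v w * (x v / sqrt_d v) * (x w / sqrt_d w))"
  unfolding dot_def matvec_def S_def by (simp add: sum_distrib_left algebra_simps)

lemma dot_self_weighted: "dot N x x = (\<Sum>v<N. d v * (x v / sqrt_d v)^2)"
  unfolding dot_def by (intro sum.cong refl) (simp add: power2_eq_square sqrt_d_square[symmetric] field_simps sqrt_d_pos[THEN less_imp_neq, symmetric])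

lemma dot_minus_quadratic_form: "dot N x x - dot N x (matvec N S x) = (\<Sum>v<N. \<Sum>w<N. A v w * (x v / sqrt_d v - x w / sqrt_d w)^2) / 2"
  unfolding sum_adj_square_diff quadratic_form_S dot_self_weighted by simp

lemma dot_plus_quadratic_form: "dot N x x + dot N x (matvec N S x) = (\<Sum>v<N. \<Sum>w<N. A v w * (x v / sqrt_d v + x w / sqrt_d w)^2) / 2"
  unfolding sum_adj_square_add quadratic_form_S dot_self_weighted by simp

lemma u0_norm: "dot N u0 u0 = 1"
proof -
  have "dot N u0 u0 = (\<Sum>v<N. d v / vol)"
    unfolding dot_def u0_def using vol_pos by (intro sum.cong refl) (simp add: sqrt_d_square[symmetric] power2_eq_square)
  also have "\<dots> = 1" using vol_pos unfolding vol_def by (simp add: sum_divide_distrib[symmetric])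
  finally show ?thesis .
qed

lemma u0_eigen: assumes "v < N" shows "matvec N S u0 v = 1 * u0 v"
proof -
  have "matvec N S u0 v = (\<Sum>w<N. A v w / (sqrt_d v * sqrt vol))"
    unfolding matvec_def S_def u0_def using sqrt_d_pos by (intro sum.cong refl) (simp add: field_simps sqrt_d_pos[THEN less_imp_neq, symmetric])
  also have "\<dots> = d v / (sqrt_d v * sqrt vol)" by (simp add: d_sum sum_divide_distrib)
  also have "\<dots> = u0 v" unfolding u0_def using sqrt_d_square[of v] sqrt_d_pos[OF assms] vol_pos
    by (simp add: field_simps)
  finally show ?thesis by simp
qed

lemma const_if_dirichlet_zero:
  assumes z: "(\<Sum>v<N. \<Sum>w<N. A v w * (y v - y w)^2) = 0" and v: "v < N"
  shows "y v = y 0"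
proof -
  have nn: "\<And>v. (\<Sum>w<N. A v w * (y v - y w)^2) \<ge> 0"
    by (intro sum_nonneg mult_nonneg_nonneg A_nonneg) auto
  have s1: "\<forall>v\<in>{..<N}. (\<Sum>w<N. A v w * (y v - y w)^2) = 0"
    using sum_nonneg_eq_0_iff[of "{..<N}" "\<lambda>v. \<Sum>w<N. A v w * (y v - y w)^2"] z nn by simp
  have edge: "y a = y b" if "E a b" for a b
  proof -
    have ab: "a < N" "b < N" using E_less_N[OF that] by auto
    have "(\<Sum>w<N. A a w * (y a - y w)^2) = 0" using s1 ab by blast
    moreover have "\<forall>w\<in>{..<N}. A a w * (y a - y w)^2 \<ge> 0" by (auto intro: mult_nonneg_nonneg A_nonneg)
    ultimately have "A a b * (y a - y b)^2 = 0"
      using sum_nonneg_eq_0_iff[of "{..<N}" "\<lambda>w. A a w * (y a - y w)^2"] ab by simp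
    thus ?thesis using that unfolding A_def by simp
  qed
  show ?thesis by (rule const_along_edges[of y v]) (use edge v in auto)
qed

lemma laplacian_kernel_const:
  assumes h: "\<And>v. v < N \<Longrightarrow> d v * z v - (\<Sum>w<N. A v w * z w) = 0" and v: "v < N"
  shows "z v = z 0"
proof -
  have "(\<Sum>v<N. z v * (d v * z v - (\<Sum>w<N. A v w * z w))) = 0" using h by simp
  hence "(\<Sum>v<N. d v * (z v)^2) - (\<Sum>v<N. \<Sum>w<N. A v w * z v * z w) = 0"
    by (simp add: algebra_simps sum_subtractf sum_distrib_left power2_eq_square)
  hence "(\<Sum>v<N. \<Sum>w<N. A v w * (z v - z w)^2) = 0" unfolding sum_adj_square_diff by simp
  thus ?thesis using const_if_dirichlet_zero v by blast
qed

lemma effective_resistance_eqI: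
  assumes i: "i < N" and j: "j < N"
    and x: "\<And>v. v < N \<Longrightarrow> d v * x v - (\<Sum>w<N. A v w * x w)
              = (if v = i then 1 else 0) - (if v = j then 1 else 0)"
  shows "effective_resistance N E i j = x i - x j"
  unfolding effective_resistance_def d_def[symmetric] nbr_sum
proof (rule the_equality)
  fix r assume "\<exists>y. (\<forall>v<N. d v * y v - (\<Sum>w<N. A v w * y w)
      = (if v = i then 1 else 0) - (if v = j then 1 else 0)) \<and> r = y i - y j"
  then obtain y where y: "\<And>v. v < N \<Longrightarrow> d v * y v - (\<Sum>w<N. A v w * y w)
      = (if v = i then 1 else 0) - (if v = j then 1 else 0)" and r: "r = y i - y j"
    by blast
  define z where "z w = y w - x w" for w
  have "d v * z v - (\<Sum>w<N. A v w * z w) = 0" if v: "v < N" for v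
    using x[OF v] y[OF v] unfolding z_def by (simp add: algebra_simps sum_subtractf)
  hence "z i = z 0" "z j = z 0" using laplacian_kernel_const i j by blast+
  thus "r = x i - x j" using r unfolding z_def by simp
qed (use x in blast)

lemma vol_eq_twice_num_edges: "vol = 2 * real (num_edges N E)"
proof -
  define P1 where "P1 = {(a, b). a < b \<and> b < N \<and> E a b}"
  define P2 where "P2 = {(a, b). b < a \<and> a < N \<and> E a b}"
  have fin1: "finite P1" unfolding P1_def by (rule finite_subset[of _ "{..<N} \<times> {..<N}"]) auto
  have P2: "P2 = (\<lambda>(a, b). (b, a)) ` P1"
  proof (intro equalityI subsetI)
    fix p assume "p \<in> P2"
    then obtain a b where p: "p = (a, b)" "b < a" "a < N" "E a b" unfolding P2_def by blast
    hence "(b, a) \<in> P1" unfolding P1_def using E_sym by auto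
    thus "p \<in> (\<lambda>(a, b). (b, a)) ` P1" unfolding p(1) by (rule rev_image_eqI) simp
  next
    fix p assume "p \<in> (\<lambda>(a, b). (b, a)) ` P1"
    then obtain a b where "(a, b) \<in> P1" "p = (b, a)" by auto
    thus "p \<in> P2" unfolding P1_def P2_def using E_sym by auto
  qed
  have fin2: "finite P2" unfolding P2 using fin1 by simp
  have card2: "card P2 = card P1" unfolding P2 by (rule card_image) (auto simp: inj_on_def split: prod.splits)
  have disj: "P1 \<inter> P2 = {}" unfolding P1_def P2_def by auto
  have un: "(SIGMA v:{..<N}. {w. w < N \<and> E v w}) = P1 \<union> P2"
  proof (intro equalityI subsetI)
    fix p assume "p \<in> (SIGMA v:{..<N}. {w. w < N \<and> E v w})"
    then obtain a b where p: "p = (a, b)" "a < N" "b < N" "E a b" by auto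
    have "a \<noteq> b" using E_irr p(4) by auto
    hence "a < b \<or> b < a" by auto
    thus "p \<in> P1 \<union> P2" unfolding P1_def P2_def using p by auto
  next
    fix p assume "p \<in> P1 \<union> P2"
    thus "p \<in> (SIGMA v:{..<N}. {w. w < N \<and> E v w})" unfolding P1_def P2_def by auto
  qed
  have "vol = real (\<Sum>v<N. card {w. w < N \<and> E v w})" unfolding vol_def d_def degree_def by simp
  also have "(\<Sum>v<N. card {w. w < N \<and> E v w}) = card (SIGMA v:{..<N}. {w. w < N \<and> E v w})"
    by (rule card_SigmaI[symmetric]) auto
  also have "\<dots> = card P1 + card P2" unfolding un by (rule card_Un_disjoint[OF fin1 fin2 disj])
  also have "card P1 = num_edges N E" unfolding num_edges_def P1_def by simp
  finally show ?thesis using card2 unfolding P1_def by (simp add: num_edges_def)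
qed

lemma exists_eigenbasis: "\<exists>u \<mu>. u 0 = u0 \<and> \<mu> 0 = 1 \<and> orthonormal N N u \<and> (\<forall>k<N. \<forall>i<N. matvec N S (u k) i = \<mu> k * u k i)"
  using orthonormal_eigenvectors_exist[OF symmetric_S u0_norm u0_eigen, of N] N2 by simp

end

locale normalized_eigenbasis = connected_simple_graph +
  fixes u :: "nat \<Rightarrow> nat \<Rightarrow> real" and \<mu> :: "nat \<Rightarrow> real"
  assumes u_0: "u 0 = u0" and mu_0: "\<mu> 0 = 1" and on: "orthonormal N N u"
    and ev: "\<And>k i. k < N \<Longrightarrow> i < N \<Longrightarrow> matvec N S (u k) i = \<mu> k * u k i"
begin

lemma eigenbasis_complete: "i < N \<Longrightarrow> j < N \<Longrightarrow> (\<Sum>k<N. u k i * u k j) = (if i = j then 1 else 0)"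
  by (rule orthonormal_complete[OF on])

lemma u_norm: "k < N \<Longrightarrow> dot N (u k) (u k) = 1" using on unfolding orthonormal_def by simp
lemma u_orth: "k < N \<Longrightarrow> l < N \<Longrightarrow> k \<noteq> l \<Longrightarrow> dot N (u k) (u l) = 0" using on unfolding orthonormal_def by simp

lemma rayleigh_quotient_u: assumes "k < N" shows "dot N (u k) (matvec N S (u k)) = \<mu> k"
proof -
  have "dot N (u k) (matvec N S (u k)) = dot N (u k) (\<lambda>i. \<mu> k * u k i)" by (rule dot_cong) (auto simp: ev assms)
  thus ?thesis using u_norm[OF assms] by (simp add: dot_scale_right)
qed

lemma sum_adj_square_nonneg: "(\<Sum>v<N. \<Sum>w<N. A v w * (f v w)^2) \<ge> 0"
  by (intro sum_nonneg mult_nonneg_nonneg A_nonneg) auto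

lemma mu_le_1: "k < N \<Longrightarrow> \<mu> k \<le> 1"
  using dot_minus_quadratic_form[of "u k"] rayleigh_quotient_u[of k] u_norm[of k] sum_adj_square_nonneg[of "\<lambda>v w. u k v / sqrt_d v - u k w / sqrt_d w"] by simp

lemma mu_ge_minus_1: "k < N \<Longrightarrow> -1 \<le> \<mu> k"
  using dot_plus_quadratic_form[of "u k"] rayleigh_quotient_u[of k] u_norm[of k] sum_adj_square_nonneg[of "\<lambda>v w. u k v / sqrt_d v + u k w / sqrt_d w"] by simp

lemma mu_lt_1: assumes k: "0 < k" "k < N" shows "\<mu> k < 1"
proof (rule ccontr)
  assume "\<not> \<mu> k < 1"
  hence m1: "\<mu> k = 1" using mu_le_1[OF k(2)] by simp
  define y where "y v = u k v / sqrt_d v" for v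
  have "(\<Sum>v<N. \<Sum>w<N. A v w * (y v - y w)^2) = 0"
    using dot_minus_quadratic_form[of "u k"] rayleigh_quotient_u[OF k(2)] u_norm[OF k(2)] m1 unfolding y_def by simp
  hence y_const: "y v = y 0" if "v < N" for v using const_if_dirichlet_zero that by blast
  define c where "c = y 0 * sqrt vol"
  have uk: "u k v = c * u0 v" if "v < N" for v
  proof -
    have "u k v = y 0 * sqrt_d v" using y_const[OF that] sqrt_d_pos[OF that] unfolding y_def[of v] by (simp add: field_simps)
    thus ?thesis unfolding c_def u0_def using vol_pos by simp
  qed
  have "dot N u0 (u k) = dot N u0 (\<lambda>v. c * u0 v)" by (rule dot_cong) (auto simp: uk)
  also have "\<dots> = c" by (simp add: dot_scale_right u0_norm)
  finally have "c = 0" using u_orth[of 0 k] k u_0 by simp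
  hence "dot N (u k) (u k) = 0" unfolding dot_def using uk by simp
  thus False using u_norm[OF k(2)] by simp
qed

lemma sum_mu_eq_0: "(\<Sum>k<N. \<mu> k) = 0"
proof -
  have "(\<Sum>k<N. \<mu> k) = (\<Sum>k<N. \<Sum>i<N. \<Sum>j<N. S i j * (u k i * u k j))"
    by (intro sum.cong refl) (simp add: rayleigh_quotient_u[symmetric] dot_def matvec_def sum_distrib_left algebra_simps)
  also have "\<dots> = (\<Sum>i<N. \<Sum>k<N. \<Sum>j<N. S i j * (u k i * u k j))" by (rule sum.swap)
  also have "\<dots> = (\<Sum>i<N. \<Sum>j<N. \<Sum>k<N. S i j * (u k i * u k j))" by (intro sum.cong refl sum.swap)
  also have "\<dots> = (\<Sum>i<N. \<Sum>j<N. S i j * (if i = j then 1 else 0))"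
    by (intro sum.cong refl) (simp add: sum_distrib_left[symmetric] eigenbasis_complete)
  also have "\<dots> = (\<Sum>i<N. S i i)" by (intro sum.cong refl) (simp add: if_distrib sum.delta cong: if_cong)
  also have "\<dots> = 0" by (simp add: S_diag)
  finally show ?thesis .
qed

subsection \<open>Effective resistance\<close>

definition coord_diff :: "nat \<Rightarrow> nat \<Rightarrow> nat \<Rightarrow> real" where
  "coord_diff i j k = u k i / sqrt_d i - u k j / sqrt_d j"

definition spectral_resistance :: "nat \<Rightarrow> nat \<Rightarrow> real" where
  "spectral_resistance i j = (\<Sum>k\<in>{1..<N}. (coord_diff i j k)^2 / (1 - \<mu> k))"

lemma sum_lessThan_split_0: "(\<Sum>k<N. f k) = f 0 + (\<Sum>k\<in>{1..<N}. f k)"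
  using sum.atLeast_Suc_lessThan[of 0 N f] N2 by (simp add: atLeast0LessThan)

lemma coord_diff_0: assumes "i < N" "j < N" shows "coord_diff i j 0 = 0"
  unfolding coord_diff_def u_0 u0_def using sqrt_d_pos[OF assms(1)] sqrt_d_pos[OF assms(2)] by simp

text \<open>The potential is \<open>D\<^sup>-\<^sup>1\<^sup>/\<^sup>2 (I - S)\<^sup>+ D\<^sup>-\<^sup>1\<^sup>/\<^sup>2 (e\<^sub>i - e\<^sub>j)\<close>, with the pseudo-inverse
  \<open>(I - S)\<^sup>+\<close> taken in the eigenbasis; \<open>coord_diff i j k\<close> is the coordinate along \<open>u\<^sub>k\<close> of
  \<open>D\<^sup>-\<^sup>1\<^sup>/\<^sup>2 (e\<^sub>i - e\<^sub>j)\<close>.\<close>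
lemma effective_resistance_spectral: assumes i: "i < N" and j: "j < N"
  shows "effective_resistance N E i j = spectral_resistance i j"
proof -
  define a where "a k = coord_diff i j k / (1 - \<mu> k)" for k
  define zz where "zz w = (\<Sum>k\<in>{1..<N}. a k * u k w)" for w
  define x where "x w = zz w / sqrt_d w" for w
  have Px: "d v * x v - (\<Sum>w<N. A v w * x w) = (if v = i then 1 else 0) - (if v = j then 1 else 0)"
    if v: "v < N" for v
  proof -
    have sqv: "sqrt_d v \<noteq> 0" using sqrt_d_pos[OF v] by simp
    have mvz: "matvec N S zz v = (\<Sum>k\<in>{1..<N}. a k * (\<mu> k * u k v))"
      unfolding zz_def matvec_sum using v by (intro sum.cong refl) (simp add: ev)
    have t1: "d v * x v = sqrt_d v * zz v" unfolding x_def sqrt_d_square[symmetric] using sqv by simp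
    have t2: "(\<Sum>w<N. A v w * x w) = sqrt_d v * matvec N S zz v"
      unfolding matvec_def S_def x_def sum_distrib_left using sqv by (intro sum.cong refl) (simp add: field_simps)
    have "d v * x v - (\<Sum>w<N. A v w * x w) = sqrt_d v * (\<Sum>k\<in>{1..<N}. a k * (1 - \<mu> k) * u k v)"
      unfolding t1 t2 mvz zz_def by (simp add: algebra_simps sum_subtractf sum_distrib_left)
    also have "(\<Sum>k\<in>{1..<N}. a k * (1 - \<mu> k) * u k v) = (\<Sum>k\<in>{1..<N}. coord_diff i j k * u k v)"
    proof (intro sum.cong refl)
      fix k assume "k \<in> {1..<N}"
      hence "1 - \<mu> k \<noteq> 0" using mu_lt_1[of k] by auto
      thus "a k * (1 - \<mu> k) * u k v = coord_diff i j k * u k v" unfolding a_def by simp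
    qed
    also have "\<dots> = (\<Sum>k<N. coord_diff i j k * u k v)" using coord_diff_0[OF i j] by (simp add: sum_lessThan_split_0)
    also have "\<dots> = (\<Sum>k<N. u k i * u k v) / sqrt_d i - (\<Sum>k<N. u k j * u k v) / sqrt_d j"
      unfolding coord_diff_def by (simp add: sum_divide_distrib sum_subtractf algebra_simps)
    also have "\<dots> = (if i = v then 1 else 0) / sqrt_d i - (if j = v then 1 else 0) / sqrt_d j"
      using i j v by (simp add: eigenbasis_complete)
    also have "sqrt_d v * \<dots> = (if v = i then 1 else 0) - (if v = j then 1 else 0)"
      using sqv by auto
    finally show ?thesis .
  qed
  have xval: "x i - x j = spectral_resistance i j"
  proof -
    have "x i - x j = (\<Sum>k\<in>{1..<N}. a k * coord_diff i j k)"
      unfolding x_def zz_def coord_diff_def by (simp add: sum_divide_distrib sum_subtractf algebra_simps)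
    also have "\<dots> = spectral_resistance i j" unfolding spectral_resistance_def a_def by (intro sum.cong refl) (simp add: power2_eq_square)
    finally show ?thesis .
  qed
  show ?thesis using effective_resistance_eqI[OF i j Px] xval by simp
qed

lemma coord_diff_swap: "coord_diff j i k = - coord_diff i j k" unfolding coord_diff_def by simp

lemma spectral_resistance_sym: "spectral_resistance i j = spectral_resistance j i" unfolding spectral_resistance_def coord_diff_swap[of i j] by simp
lemma spectral_resistance_diag: "spectral_resistance i i = 0" unfolding spectral_resistance_def coord_diff_def by simp

lemma weighted_coord_diff_sum: assumes k: "k \<in> {1..<N}"
  shows "(\<Sum>i<N. \<Sum>j<N. (d i + d j) * (coord_diff i j k)^2) = 2 * real N + 2 * vol * (\<Sum>i<N. (u k i)^2 / d i)"
proof -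
  define a where "a i = u k i / sqrt_d i" for i
  have cca: "coord_diff i j k = a i - a j" for i j unfolding coord_diff_def a_def ..
  have s1: "(\<Sum>i<N. d i * (a i)^2) = 1"
  proof -
    have "(\<Sum>i<N. d i * (a i)^2) = (\<Sum>i<N. u k i * u k i)"
      unfolding a_def using sqrt_d_pos
      by (intro sum.cong refl) (simp add: sqrt_d_square[symmetric] power2_eq_square field_simps less_imp_neq[symmetric])
    also have "\<dots> = 1" using u_norm[of k] k unfolding dot_def by simp
    finally show ?thesis .
  qed
  have s2: "(\<Sum>i<N. (a i)^2) = (\<Sum>i<N. (u k i)^2 / d i)"
    unfolding a_def by (intro sum.cong refl) (simp add: power2_eq_square sqrt_d_square[symmetric])
  have s3: "(\<Sum>i<N. d i * a i) = 0"
  proof -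
    have "(\<Sum>i<N. d i * a i) = (\<Sum>i<N. sqrt vol * (u0 i * u k i))"
      unfolding a_def u0_def using sqrt_d_pos vol_pos
      by (intro sum.cong refl) (simp add: sqrt_d_square[symmetric] field_simps less_imp_neq[symmetric])
    also have "\<dots> = sqrt vol * dot N u0 (u k)" unfolding dot_def by (simp add: sum_distrib_left)
    also have "dot N u0 (u k) = 0" using u_orth[of 0 k] k u_0 by simp
    finally show ?thesis by simp
  qed
  show ?thesis unfolding cca sum_weighted_square_diff s1 s2 s3 vol_def by simp
qed

lemma additive_degree_kirchhoff_spectral:
  "additive_degree_kirchhoff N E = (\<Sum>k\<in>{1..<N}. (real N + vol * (\<Sum>i<N. (u k i)^2 / d i)) / (1 - \<mu> k))"
proof -
  have "additive_degree_kirchhoff N E = (\<Sum>(i, j)\<in>{(i, j). i < j \<and> j < N}. (d i + d j) * spectral_resistance i j)"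
    unfolding additive_degree_kirchhoff_def
    by (intro sum.cong refl) (auto simp: effective_resistance_spectral d_def)
  also have "\<dots> = (\<Sum>i<N. \<Sum>j<N. (d i + d j) * spectral_resistance i j) / 2"
    by (rule sum_pairs_eq_half) (auto simp: spectral_resistance_sym spectral_resistance_diag)
  also have "(\<Sum>i<N. \<Sum>j<N. (d i + d j) * spectral_resistance i j) = (\<Sum>i<N. \<Sum>j<N. \<Sum>k\<in>{1..<N}. (d i + d j) * ((coord_diff i j k)^2 / (1 - \<mu> k)))"
    unfolding spectral_resistance_def by (simp add: sum_distrib_left)
  also have "\<dots> = (\<Sum>i<N. \<Sum>k\<in>{1..<N}. \<Sum>j<N. (d i + d j) * ((coord_diff i j k)^2 / (1 - \<mu> k)))"
    by (intro sum.cong refl sum.swap)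
  also have "\<dots> = (\<Sum>k\<in>{1..<N}. \<Sum>i<N. \<Sum>j<N. (d i + d j) * ((coord_diff i j k)^2 / (1 - \<mu> k)))"
    by (rule sum.swap)
  also have "\<dots> = (\<Sum>k\<in>{1..<N}. (\<Sum>i<N. \<Sum>j<N. (d i + d j) * (coord_diff i j k)^2) / (1 - \<mu> k))"
    by (simp add: sum_divide_distrib)
  also have "\<dots> = (\<Sum>k\<in>{1..<N}. (2 * real N + 2 * vol * (\<Sum>i<N. (u k i)^2 / d i)) / (1 - \<mu> k))"
    by (intro sum.cong refl) (simp add: weighted_coord_diff_sum)
  also have "\<dots> = 2 * (\<Sum>k\<in>{1..<N}. (real N + vol * (\<Sum>i<N. (u k i)^2 / d i)) / (1 - \<mu> k))"
  proof -
    define X where "X k = (\<Sum>i<N. (u k i)^2 / d i)" for k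
    show ?thesis unfolding X_def[symmetric] sum_distrib_left by (intro sum.cong refl) (simp add: distrib_left mult.assoc)
  qed
  finally show ?thesis by simp
qed

subsection \<open>The spectrum of the transition matrix\<close>

definition Vm :: "real mat" where "Vm = mat N N (\<lambda>(v, k). u k v / sqrt_d v)"
definition Wm :: "real mat" where "Wm = mat N N (\<lambda>(k, v). u k v * sqrt_d v)"
definition Lm :: "real mat" where "Lm = mat N N (\<lambda>(i, j). if i = j then \<mu> i else 0)"

lemma W_mult_V: "Wm * Vm = 1\<^sub>m N"
proof (rule eq_matI)
  fix k l assume k: "k < dim_row (1\<^sub>m N :: real mat)" and l: "l < dim_col (1\<^sub>m N :: real mat)"
  hence kl: "k < N" "l < N" by auto
  have "(Wm * Vm) $$ (k, l) = (\<Sum>v<N. u k v * sqrt_d v * (u l v / sqrt_d v))"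
    unfolding Wm_def Vm_def mat_mult_mat_entry[OF kl] by simp
  also have "\<dots> = dot N (u k) (u l)" unfolding dot_def using sqrt_d_pos by (intro sum.cong refl) (simp add: less_imp_neq[symmetric])
  also have "\<dots> = 1\<^sub>m N $$ (k, l)" using on kl unfolding orthonormal_def by simp
  finally show "(Wm * Vm) $$ (k, l) = 1\<^sub>m N $$ (k, l)" .
qed (auto simp: Wm_def Vm_def)

lemma V_mult_W: "Vm * Wm = 1\<^sub>m N"
proof (rule eq_matI)
  fix v w assume v: "v < dim_row (1\<^sub>m N :: real mat)" and w: "w < dim_col (1\<^sub>m N :: real mat)"
  hence vw: "v < N" "w < N" by auto
  have "(Vm * Wm) $$ (v, w) = (\<Sum>k<N. u k v / sqrt_d v * (u k w * sqrt_d w))"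
    unfolding Wm_def Vm_def mat_mult_mat_entry[OF vw] by simp
  also have "\<dots> = sqrt_d w / sqrt_d v * (\<Sum>k<N. u k v * u k w)" by (simp add: sum_distrib_left algebra_simps)
  also have "\<dots> = 1\<^sub>m N $$ (v, w)" using vw sqrt_d_pos[of v] sqrt_d_pos[of w] by (simp add: eigenbasis_complete)
  finally show "(Vm * Wm) $$ (v, w) = 1\<^sub>m N $$ (v, w)" .
qed (auto simp: Wm_def Vm_def)

lemma P_mult_V: "transition_matrix N E * Vm = Vm * Lm"
proof (rule eq_matI)
  fix v k assume v: "v < dim_row (Vm * Lm)" and k: "k < dim_col (Vm * Lm)"
  hence vk: "v < N" "k < N" by (auto simp: Vm_def Lm_def)
  have "(transition_matrix N E * Vm) $$ (v, k) = (\<Sum>w<N. A v w / d v * (u k w / sqrt_d w))"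
    unfolding Vm_def transition_matrix_def mat_mult_mat_entry[OF vk] by (intro sum.cong refl) (auto simp: A_def d_def)
  also have "\<dots> = matvec N S (u k) v / sqrt_d v"
    unfolding matvec_def S_def sum_divide_distrib using sqrt_d_pos[of v] vk(1)
    by (intro sum.cong refl) (simp add: sqrt_d_square[symmetric])
  also have "\<dots> = \<mu> k * u k v / sqrt_d v" using ev vk by simp
  also have "\<dots> = (\<Sum>j<N. u j v / sqrt_d v * (if j = k then \<mu> j else 0))"
    using vk by (simp add: if_distrib sum.delta cong: if_cong)
  also have "\<dots> = (Vm * Lm) $$ (v, k)"
    unfolding Vm_def Lm_def mat_mult_mat_entry[OF vk] by simp
  finally show "(transition_matrix N E * Vm) $$ (v, k) = (Vm * Lm) $$ (v, k)" .
qed (auto simp: Vm_def Lm_def transition_matrix_def)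

lemma char_poly_transition_matrix: "char_poly (transition_matrix N E) = (\<Prod>k<N. [:- \<mu> k, 1:])"
proof -
  have P: "transition_matrix N E \<in> carrier_mat N N" unfolding transition_matrix_def by simp
  have V: "Vm \<in> carrier_mat N N" and W: "Wm \<in> carrier_mat N N" and L: "Lm \<in> carrier_mat N N"
    unfolding Vm_def Wm_def Lm_def by simp_all
  have "transition_matrix N E = transition_matrix N E * (Vm * Wm)" using P by (simp add: V_mult_W)
  also have "\<dots> = (transition_matrix N E * Vm) * Wm" using P V W by (simp add: assoc_mult_mat)
  also have "\<dots> = Vm * Lm * Wm" by (simp add: P_mult_V)
  finally have eq: "transition_matrix N E = Vm * Lm * Wm" .
  have "similar_mat_wit (transition_matrix N E) Lm Vm Wm"
    unfolding similar_mat_wit_def Let_def using P V W L V_mult_W W_mult_V eq by auto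
  hence "char_poly (transition_matrix N E) = char_poly Lm"
    by (intro char_poly_similar) (auto simp: similar_mat_def)
  also have "char_poly Lm = (\<Prod>a\<leftarrow>diag_mat Lm. [:- a, 1:])"
    by (rule char_poly_upper_triangular[OF L]) (auto simp: upper_triangular_def Lm_def)
  also have "diag_mat Lm = map \<mu> [0..<N]" unfolding diag_mat_def Lm_def by simp
  also have "(\<Prod>a\<leftarrow>map \<mu> [0..<N]. [:- a, 1:]) = (\<Prod>k<N. [:- \<mu> k, 1:])" by (rule prod_list_map_upt)
  finally show ?thesis .
qed

definition lambda2 :: real where "lambda2 = Max (\<mu> ` {1..<N})"

lemma lambda2_attained: "\<exists>k\<in>{1..<N}. \<mu> k = lambda2"
proof -
  have "lambda2 \<in> \<mu> ` {1..<N}" unfolding lambda2_def by (rule Max_in) (use N2 in auto)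
  then obtain k where "k \<in> {1..<N}" "lambda2 = \<mu> k" by blast
  thus ?thesis by auto
qed

lemma mu_le_lambda2: "k \<in> {1..<N} \<Longrightarrow> \<mu> k \<le> lambda2"
  unfolding lambda2_def by (rule Max_ge) auto

lemma lambda2_lt_1: "lambda2 < 1"
proof -
  obtain k where k: "k \<in> {1..<N}" "\<mu> k = lambda2" using lambda2_attained by blast
  have "\<mu> k < 1" using k(1) by (intro mu_lt_1) auto
  thus ?thesis using k(2) by simp
qed

lemma mu_le_lambda2_or_0: "k < N \<Longrightarrow> k = 0 \<or> \<mu> k \<le> lambda2"
  using mu_le_lambda2 by (cases k) auto

lemma sum_order_roots_ge:
  "(\<Sum>y\<in>{y. poly (\<Prod>k<N. [:- \<mu> k, 1:]) y = 0 \<and> x \<le> y}. order y (\<Prod>k<N. [:- \<mu> k, 1:]))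
     = card {k\<in>{..<N}. x \<le> \<mu> k}"
proof -
  define p where "p = (\<Prod>k<N. [:- \<mu> k, 1:])"
  define Sx where "Sx = {k\<in>{..<N}. x \<le> \<mu> k}"
  have pz: "poly p y = 0 \<longleftrightarrow> (\<exists>k\<in>{..<N}. y - \<mu> k = 0)" for y
  proof -
    have "poly p y = (\<Prod>k<N. (y - \<mu> k))" unfolding p_def poly_prod by (intro prod.cong refl) simp
    thus ?thesis by (simp only: prod_zero_iff[OF finite_lessThan])
  qed
  have roots: "{y. poly p y = 0 \<and> x \<le> y} = \<mu> ` Sx"
  proof (intro equalityI subsetI)
    fix y assume "y \<in> {y. poly p y = 0 \<and> x \<le> y}"
    then obtain k where k: "k < N" "y = \<mu> k" "x \<le> y" using pz by auto
    hence "k \<in> Sx" unfolding Sx_def by simp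
    thus "y \<in> \<mu> ` Sx" using k(2) by (rule rev_image_eqI)
  next
    fix y assume "y \<in> \<mu> ` Sx"
    then obtain k where k: "k \<in> Sx" "y = \<mu> k" by blast
    hence "poly p y = 0" using pz unfolding Sx_def by auto
    thus "y \<in> {y. poly p y = 0 \<and> x \<le> y}" using k unfolding Sx_def by simp
  qed
  have "(\<Sum>y\<in>\<mu> ` Sx. order y p) = (\<Sum>y\<in>\<mu> ` Sx. card {k\<in>Sx. \<mu> k = y})"
  proof (intro sum.cong refl)
    fix y assume "y \<in> \<mu> ` Sx"
    hence "x \<le> y" unfolding Sx_def by auto
    hence "{k\<in>{..<N}. \<mu> k = y} = {k\<in>Sx. \<mu> k = y}" unfolding Sx_def by auto
    moreover have "order y p = card {k\<in>{..<N}. \<mu> k = y}" unfolding p_def by (rule order_prod_linear_factors) simp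
    ultimately show "order y p = card {k\<in>Sx. \<mu> k = y}" by simp
  qed
  also have "\<dots> = card Sx"
  proof -
    have "card Sx = sum (\<lambda>_. 1::nat) Sx" by (rule card_eq_sum)
    also have "\<dots> = sum (\<lambda>y. sum (\<lambda>_. 1::nat) {k. k \<in> Sx \<and> \<mu> k = y}) (\<mu> ` Sx)"
      by (rule sum.image_gen) (simp add: Sx_def)
    also have "\<dots> = (\<Sum>y\<in>\<mu> ` Sx. card {k\<in>Sx. \<mu> k = y})" by (simp only: card_eq_sum[symmetric])
    finally show ?thesis by simp
  qed
  finally have "(\<Sum>y\<in>{y. poly p y = 0 \<and> x \<le> y}. order y p) = card Sx" unfolding roots .
  thus ?thesis unfolding p_def Sx_def .
qed

lemma second_largest_eigenvalue_eq_lambda2: "second_largest_eigenvalue (transition_matrix N E) = lambda2"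
  unfolding second_largest_eigenvalue_def kth_largest_root_def char_poly_transition_matrix sum_order_roots_ge
proof (rule Greatest_equality)
  obtain k where k: "k \<in> {1..<N}" "\<mu> k = lambda2" using lambda2_attained by blast
  have "{0, k} \<subseteq> {k\<in>{..<N}. lambda2 \<le> \<mu> k}" using k lambda2_lt_1 mu_0 N2 by auto
  moreover have "card {0, k} = 2" using k by auto
  moreover have "finite {k\<in>{..<N}. lambda2 \<le> \<mu> k}" by simp
  ultimately show "2 \<le> card {k\<in>{..<N}. lambda2 \<le> \<mu> k}"
    using card_mono[of "{k\<in>{..<N}. lambda2 \<le> \<mu> k}" "{0, k}"] by simp
next
  fix y assume y: "2 \<le> card {k\<in>{..<N}. y \<le> \<mu> k}"
  show "y \<le> lambda2"
  proof (rule ccontr)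
    assume "\<not> y \<le> lambda2"
    hence "{k\<in>{..<N}. y \<le> \<mu> k} \<subseteq> {0}" using mu_le_lambda2_or_0 by force
    hence "card {k\<in>{..<N}. y \<le> \<mu> k} \<le> card {0::nat}" by (intro card_mono) auto
    thus False using y by simp
  qed
qed

lemma sum_mu_nonzero: "(\<Sum>k\<in>{1..<N}. \<mu> k) = -1"
  using sum_mu_eq_0 mu_0 by (simp add: sum_lessThan_split_0)

lemma vol_sum_weighted_u_squares: "vol * (\<Sum>k\<in>{1..<N}. (\<Sum>i<N. (u k i)^2 / d i)) = vol * (\<Sum>j<N. 1 / d j) - real N"
proof -
  have "(\<Sum>k\<in>{1..<N}. (\<Sum>i<N. (u k i)^2 / d i)) = (\<Sum>i<N. (\<Sum>k\<in>{1..<N}. (u k i)^2) / d i)"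
    by (subst sum.swap) (simp add: sum_divide_distrib)
  also have "\<dots> = (\<Sum>i<N. (1 / d i - 1 / vol))"
  proof (intro sum.cong refl)
    fix i assume i: "i \<in> {..<N}"
    have "(\<Sum>k<N. (u k i)^2) = 1" using eigenbasis_complete[of i i] i by (simp add: power2_eq_square)
    hence "(\<Sum>k\<in>{1..<N}. (u k i)^2) = 1 - (u0 i)^2" using u_0 by (simp add: sum_lessThan_split_0)
    also have "(u0 i)^2 = d i / vol" unfolding u0_def using vol_pos
      by (simp add: power2_eq_square sqrt_d_square[symmetric])
    finally show "(\<Sum>k\<in>{1..<N}. (u k i)^2) / d i = 1 / d i - 1 / vol"
      using d_pos[of i] i vol_pos by (simp add: field_simps)
  qed
  also have "\<dots> = (\<Sum>j<N. 1 / d j) - real N / vol" by (simp add: sum_subtractf)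
  finally have h: "(\<Sum>k\<in>{1..<N}. (\<Sum>i<N. (u k i)^2 / d i)) = (\<Sum>j<N. 1 / d j) - real N / vol" .
  have "vol * (\<Sum>k\<in>{1..<N}. (\<Sum>i<N. (u k i)^2 / d i)) = vol * (\<Sum>j<N. 1 / d j) - vol * (real N / vol)"
    unfolding h by (simp add: right_diff_distrib)
  thus ?thesis using vol_pos by simp
qed

lemma additive_degree_kirchhoff_le:
  defines "k \<equiv> \<lfloor>(lambda2 * (real N - 1) + 1) / (lambda2 + 1)\<rfloor>"
  defines "theta \<equiv> lambda2 * (real N - real_of_int k - 2) - real_of_int k + 2"
  shows "additive_degree_kirchhoff N E
    \<le> real N * ((real N - real_of_int k - 2) / (1 - lambda2) + real_of_int k / 2 + 1 / theta)
      + 1 / (1 - lambda2) * (vol * (\<Sum>j<N. 1 / d j) - real N)"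
proof -
  define X where "X k = (\<Sum>i<N. (u k i)^2 / d i)" for k
  have X0: "X k \<ge> 0" for k unfolding X_def using d_nonneg by (intro sum_nonneg divide_nonneg_nonneg) auto
  have "additive_degree_kirchhoff N E
      = real N * (\<Sum>k\<in>{1..<N}. 1 / (1 - \<mu> k)) + (\<Sum>k\<in>{1..<N}. vol * X k / (1 - \<mu> k))"
    unfolding additive_degree_kirchhoff_spectral X_def[symmetric]
    by (simp add: sum_distrib_left sum.distrib add_divide_distrib)
  also have "(\<Sum>k\<in>{1..<N}. 1 / (1 - \<mu> k))
      \<le> (real N - real_of_int k - 2) / (1 - lambda2) + real_of_int k / 2 + 1 / theta"
    unfolding k_def theta_def
    by (rule sum_inverse_one_minus_le[of "{1..<N}" N \<mu> lambda2])
       (use N2 lambda2_lt_1 sum_mu_nonzero mu_ge_minus_1 mu_le_lambda2 in auto)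
  also have "(\<Sum>k\<in>{1..<N}. vol * X k / (1 - \<mu> k)) \<le> (\<Sum>k\<in>{1..<N}. vol * X k / (1 - lambda2))"
  proof (intro sum_mono divide_left_mono)
    fix k assume k: "k \<in> {1..<N}"
    show "1 - lambda2 \<le> 1 - \<mu> k" using mu_le_lambda2[OF k] by simp
    show "0 \<le> vol * X k" using vol_pos X0[of k] by simp
    show "0 < (1 - \<mu> k) * (1 - lambda2)" using mu_lt_1[of k] k lambda2_lt_1 by simp
  qed
  also have "(\<Sum>k\<in>{1..<N}. vol * X k / (1 - lambda2)) = 1 / (1 - lambda2) * (vol * (\<Sum>j<N. 1 / d j) - real N)"
    using vol_sum_weighted_u_squares unfolding X_def[symmetric]
    by (simp add: sum_divide_distrib[symmetric] sum_distrib_left[symmetric])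
  finally show ?thesis by (simp add: mult_left_mono)
qed

end

theorem corollary5:
  fixes N :: nat and E :: "nat \<Rightarrow> nat \<Rightarrow> bool"
  assumes "simple_graph N E" and "connected_graph N E" and "N \<ge> 2"
  defines "lam2 \<equiv> second_largest_eigenvalue (transition_matrix N E)"
  defines "k \<equiv> \<lfloor>(lam2 * (real N - 1) + 1) / (lam2 + 1)\<rfloor>"
  defines "theta \<equiv> lam2 * (real N - real_of_int k - 2) - real_of_int k + 2"
  shows "additive_degree_kirchhoff N E
     \<le> real N * ((real N - real_of_int k - 2) / (1 - lam2) + real_of_int k / 2 + 1 / theta)
       + 1 / (1 - lam2) * (2 * real (num_edges N E) * (\<Sum>j<N. 1 / real (degree N E j)) - real N)"
proof -
  interpret connected_simple_graph N E using assms(1-3) by unfold_locales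
  obtain u \<mu> where "u 0 = u0" "\<mu> 0 = 1" "orthonormal N N u"
      "\<forall>k<N. \<forall>i<N. matvec N S (u k) i = \<mu> k * u k i"
    using exists_eigenbasis by blast
  then interpret normalized_eigenbasis N E u \<mu> by unfold_locales auto
  have "lam2 = lambda2" unfolding lam2_def by (rule second_largest_eigenvalue_eq_lambda2)
  thus ?thesis unfolding k_def theta_def
    using additive_degree_kirchhoff_le by (simp add: vol_eq_twice_num_edges d_def mult.assoc)
qed

end
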